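(* Let $\Omega=\bigcup_{j=1}^n (a_j,b_j)\subseteq\mathbb{R}$ be a finite union of open intervals of total length $1$, and let $\Lambda\subseteq\mathbb{R}$ be a spectrum of $\Omega$. Define $\phi:\mathbb{R}\to\mathbb{C}^{2n}$ by $$\phi(x)=\left(e^{-2\pi i a_1 x},\ldots,e^{-2\pi i a_n x},e^{-2\pi i b_1 x},\ldots,e^{-2\pi i b_n x}\right).$$ Call a subset $B\subseteq\Lambda$ a generating set if $\operatorname{span}\{\phi(b): b\in B\}=\operatorname{span}\{\phi(\lambda):\lambda\in\Lambda\}$ (complex linear spans in $\mathbb{C}^{2n}$). Then there is a finite $T>0$ such that for every $x\in\mathbb{R}$ the set $\Lambda\cap(x,x+T)$ is a generating set.
   Context: A set $\Lambda\subseteq\mathbb{R}$ is a spectrum of a measurable set $\Omega\subseteq\mathbb{R}$ of Lebesgue measure $1$ if the exponentials $e_\lambda(x)=e^{2\pi i\lambda x}$, $\lambda\in\Lambda$, form a complete orthonormal system in $L^2(\Omega)$ (with inner product $\langle f,g\rangle=\int_\Omega f\overline{g}$). *)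

theory Defs
  imports "HOL-Analysis.Analysis"
begin

definition expo :: "real \<Rightarrow> real \<Rightarrow> complex" where
  "expo l x = exp (2 * complex_of_real pi * \<i> * complex_of_real (l * x))"

text \<open>Lambda is a spectrum of Omega: the exponentials e_lambda, lambda in Lambda, form a
  complete orthonormal system in L^2(Omega) (Lebesgue measure, inner product
  integral of f times conjugate g over Omega).\<close>
definition is_spectrum :: "real set \<Rightarrow> real set \<Rightarrow> bool" where
  "is_spectrum \<Omega> \<Lambda> \<longleftrightarrow>
     \<Omega> \<in> sets lebesgue \<and>
     (\<forall>l\<in>\<Lambda>. \<forall>m\<in>\<Lambda>.
        (LINT x:\<Omega>|lebesgue. expo l x * cnj (expo m x)) = (if l = m then 1 else 0)) \<and>
     (\<forall>f :: real \<Rightarrow> complex.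
        f \<in> borel_measurable lebesgue \<and> set_integrable lebesgue \<Omega> (\<lambda>x. (norm (f x))\<^sup>2) \<and>
        (\<forall>l\<in>\<Lambda>. (LINT x:\<Omega>|lebesgue. f x * cnj (expo l x)) = 0)
        \<longrightarrow> (AE x in lebesgue. x \<in> \<Omega> \<longrightarrow> f x = 0))"

text \<open>Vectors of C^(2n) are represented as functions nat => complex; coordinates
  0..n-1 correspond to a_1..a_n and n..2n-1 to b_1..b_n (all other coordinates are 0).\<close>
definition phi :: "nat \<Rightarrow> (nat \<Rightarrow> real) \<Rightarrow> (nat \<Rightarrow> real) \<Rightarrow> real \<Rightarrow> nat \<Rightarrow> complex" where
  "phi n a b x = (\<lambda>k. if k < n then exp (- 2 * complex_of_real pi * \<i> * complex_of_real (a k * x))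
                     else if k < 2 * n then exp (- 2 * complex_of_real pi * \<i> * complex_of_real (b (k - n) * x))
                     else 0)"

definition cspan :: "(nat \<Rightarrow> complex) set \<Rightarrow> (nat \<Rightarrow> complex) set" where
  "cspan S = {w. \<exists>F c. finite F \<and> F \<subseteq> S \<and> w = (\<lambda>k. \<Sum>v\<in>F. c v * v k)}"

definition generating_set :: "nat \<Rightarrow> (nat \<Rightarrow> real) \<Rightarrow> (nat \<Rightarrow> real) \<Rightarrow> real set \<Rightarrow> real set \<Rightarrow> bool" where
  "generating_set n a b \<Lambda> B \<longleftrightarrow> B \<subseteq> \<Lambda> \<and> cspan (phi n a b ` B) = cspan (phi n a b ` \<Lambda>)"

end

theory Submission
  imports Defs "HOL-Library.Function_Algebras"
begin

text \<open>Orthogonality of \<open>e\<^sub>l\<close> and \<open>e\<^sub>m\<close> on \<open>\<Omega>\<close> says that \<open>\<phi>(l)\<close> and \<open>\<phi>(m)\<close> are orthogonal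
  for a Hermitian form of signature \<open>(n, n)\<close>, so \<open>\<phi>(\<Lambda>)\<close> spans a totally isotropic space and every
  independent subset of it has at most \<open>n\<close> elements; orthogonality also forces \<open>\<Lambda>\<close> to be uniformly
  separated. If a window of \<open>\<Lambda>\<close> fails to generate, the vectors \<open>\<phi>(\<lambda>)\<close> of the window span at most
  \<open>n - 1\<close> dimensions, so some \<open>c \<noteq> 0\<close> in \<open>\<complex>\<^sup>n\<close> annihilates them under a pairing that computes
  the Fourier coefficients of the test function \<open>e\<^sub>\<xi> \<cdot> \<Sum>\<^sub>j c\<^sub>j 1\<^bsub>(a\<^sub>j,b\<^sub>j)\<^esub>\<close>. These coefficients then
  vanish inside the window and are \<open>O(|c| / |\<lambda> - \<xi>|)\<close> outside, so by Parseval the squared norm of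
  the test function is \<open>O(|c|\<^sup>2 / R)\<close> for a window of radius \<open>R\<close>, while it is at least
  \<open>min\<^sub>j (b\<^sub>j - a\<^sub>j) \<Sum>\<^sub>j |c\<^sub>j|\<^sup>2\<close>. This is impossible for large \<open>R\<close>.\<close>

section \<open>Linear algebra on complex sequences\<close>

text \<open>\<open>nat \<Rightarrow> complex\<close> carries no complex vector space instance, so the one used below is
  set up by hand; \<open>\<complex>\<^sup>m\<close> is the subspace of sequences supported on \<open>{..<m}\<close>.\<close>
definition cscale :: "complex \<Rightarrow> (nat \<Rightarrow> complex) \<Rightarrow> nat \<Rightarrow> complex" where
  "cscale c v = (\<lambda>k. c * v k)"

interpretation CV: vector_space cscale
  by unfold_locales (auto simp: cscale_def fun_eq_iff algebra_simps)

interpretation CVP: vector_space_pair cscale cscale ..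

lemma sum_fun_apply: "(\<Sum>v\<in>F. (f v :: 'a \<Rightarrow> 'b::comm_monoid_add)) k = (\<Sum>v\<in>F. f v k)"
  by (induction F rule: infinite_finite_induct) auto

lemma cspan_eq_span: "cspan S = CV.span S"
proof
  show "cspan S \<subseteq> CV.span S"
  proof
    fix w assume "w \<in> cspan S"
    then obtain F c where F: "finite F" "F \<subseteq> S" and w: "w = (\<lambda>k. \<Sum>v\<in>F. c v * v k)"
      unfolding cspan_def by blast
    have "w = (\<Sum>v\<in>F. cscale (c v) v)"
      unfolding w by (auto simp: fun_eq_iff sum_fun_apply cscale_def)
    also have "\<dots> \<in> CV.span S"
      using F by (intro CV.span_sum CV.span_scale) (auto intro: CV.span_base)
    finally show "w \<in> CV.span S" .
  qed
  show "CV.span S \<subseteq> cspan S"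
  proof
    fix w assume "w \<in> CV.span S"
    then obtain u where u: "finite {v. u v \<noteq> 0}" "\<forall>v. u v \<noteq> 0 \<longrightarrow> v \<in> S"
      and w: "w = (\<Sum>v | u v \<noteq> 0. cscale (u v) v)"
      unfolding CV.span_explicit' by blast
    show "w \<in> cspan S"
      unfolding cspan_def
      by (rule CollectI, rule exI[of _ "{v. u v \<noteq> 0}"], rule exI[of _ u])
         (use u in \<open>auto simp: w fun_eq_iff sum_fun_apply cscale_def\<close>)
  qed
qed

definition supported :: "nat \<Rightarrow> (nat \<Rightarrow> complex) set" where
  "supported m = {v. \<forall>k\<ge>m. v k = 0}"

lemma subspace_supported: "CV.subspace (supported m)"
  unfolding CV.subspace_def supported_def by (auto simp: cscale_def)

lemma supported_sum_squares_pos: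
  assumes "c \<in> supported n" "c \<noteq> 0"
  shows "0 < (\<Sum>j<n. (cmod (c j))\<^sup>2)"
proof -
  obtain k where "c k \<noteq> 0" using assms(2) by (auto simp: fun_eq_iff)
  moreover have "k < n"
  proof (rule ccontr)
    assume "\<not> k < n"
    then have "c k = 0" using assms(1) by (simp add: supported_def)
    with \<open>c k \<noteq> 0\<close> show False by simp
  qed
  ultimately have "0 < (cmod (c k))\<^sup>2" "(cmod (c k))\<^sup>2 \<le> (\<Sum>j<n. (cmod (c j))\<^sup>2)"
    by (auto intro: member_le_sum)
  then show ?thesis by linarith
qed

definition unit_vec :: "nat \<Rightarrow> nat \<Rightarrow> complex" where
  "unit_vec j = (\<lambda>k. if k = j then 1 else 0)"

lemma span_unit_vecs: "CV.span (unit_vec ` {..<m}) = supported m"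
proof
  show "CV.span (unit_vec ` {..<m}) \<subseteq> supported m"
    by (rule CV.span_minimal[OF _ subspace_supported]) (auto simp: unit_vec_def supported_def)
  show "supported m \<subseteq> CV.span (unit_vec ` {..<m})"
  proof
    fix v assume "v \<in> supported m"
    then have "v = (\<Sum>j<m. cscale (v j) (unit_vec j))"
      by (auto simp: supported_def fun_eq_iff sum_fun_apply cscale_def unit_vec_def not_less
          if_distrib cong: if_cong)
    also have "\<dots> \<in> CV.span (unit_vec ` {..<m})"
      by (intro CV.span_sum CV.span_scale CV.span_base) auto
    finally show "v \<in> CV.span (unit_vec ` {..<m})" .
  qed
qed

lemma card_unit_vecs: "card (unit_vec ` {..<m}) = m"
proof -
  have "inj unit_vec" by (auto simp: inj_on_def unit_vec_def fun_eq_iff split: if_splits)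
  then show ?thesis by (simp add: card_image inj_on_subset)
qed

lemma independent_unit_vecs: "CV.independent (unit_vec ` {..<m})"
proof (induction m)
  case 0 then show ?case by (simp add: CV.independent_empty)
next
  case (Suc m)
  have "unit_vec m \<notin> CV.span (unit_vec ` {..<m})"
    unfolding span_unit_vecs by (simp add: supported_def unit_vec_def)
  moreover have "unit_vec ` {..<Suc m} = insert (unit_vec m) (unit_vec ` {..<m})"
    by (auto simp: lessThan_Suc)
  ultimately show ?case using CV.independent_insertI[OF _ Suc] by simp
qed

lemma card_independent_le_if_linear_inj:
  assumes "finite X" "CV.independent X" "Vector_Spaces.linear cscale cscale f"
    and "f ` X \<subseteq> supported m" and "\<And>x. x \<in> CV.span X \<Longrightarrow> f x = 0 \<Longrightarrow> x = 0"
  shows "card X \<le> m"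
proof -
  have inj: "inj_on f (CV.span X)"
    using CVP.linear_inj_on_iff_eq_0[OF assms(3) CV.subspace_span] assms(5) by auto
  have "CV.independent (f ` X)"
    by (rule CVP.linear_independent_injective_image[OF assms(3,2) inj])
  then have "card (f ` X) \<le> card (unit_vec ` {..<m})"
    using CV.independent_span_bound[of "unit_vec ` {..<m}"] assms(4) by (simp add: span_unit_vecs)
  moreover have "card (f ` X) = card X"
    by (rule card_image, rule inj_on_subset[OF inj CV.span_superset])
  ultimately show ?thesis by (simp add: card_unit_vecs)
qed

lemma linear_kernel_nontrivial:
  assumes "Vector_Spaces.linear cscale cscale f" "f ` supported n \<subseteq> supported m" "m < n"
  obtains c where "c \<in> supported n" "c \<noteq> 0" "f c = 0"
proof -
  have "unit_vec ` {..<n} \<subseteq> supported n" by (auto simp: unit_vec_def supported_def)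
  then have images: "f ` unit_vec ` {..<n} \<subseteq> supported m"
    using image_mono assms(2) by (metis order_trans)
  have "\<not> (\<forall>c\<in>supported n. f c = 0 \<longrightarrow> c = 0)"
  proof
    assume "\<forall>c\<in>supported n. f c = 0 \<longrightarrow> c = 0"
    then have "card (unit_vec ` {..<n}) \<le> m"
      by (intro card_independent_le_if_linear_inj[OF _ independent_unit_vecs assms(1) images])
         (auto simp: span_unit_vecs)
    with assms(3) show False by (simp add: card_unit_vecs)
  qed
  then show ?thesis using that by blast
qed

lemma linear_functionals_common_zero:
  fixes L :: "'w \<Rightarrow> (nat \<Rightarrow> complex) \<Rightarrow> complex"
  assumes "finite B" "card B < n"
    and add: "\<And>w c d. w \<in> B \<Longrightarrow> L w (c + d) = L w c + L w d"
    and scale: "\<And>w k c. w \<in> B \<Longrightarrow> L w (cscale k c) = k * L w c"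
  obtains c where "c \<in> supported n" "c \<noteq> 0" "\<And>w. w \<in> B \<Longrightarrow> L w c = 0"
proof -
  obtain enum where enum: "bij_betw enum {..<card B} B"
    using ex_bij_betw_nat_finite[OF assms(1)] by (auto simp: atLeast0LessThan)
  define f where "f c = (\<lambda>i. if i < card B then L (enum i) c else 0)" for c
  have enumB: "enum i \<in> B" if "i < card B" for i
    using enum that by (auto simp: bij_betw_def)
  have "Vector_Spaces.linear cscale cscale f"
    unfolding Vector_Spaces.linear_iff
    by (auto simp: CV.vector_space_axioms f_def fun_eq_iff add scale enumB; simp add: cscale_def)
  moreover have "f ` supported n \<subseteq> supported (card B)"
    by (auto simp: f_def supported_def)
  ultimately obtain c where c: "c \<in> supported n" "c \<noteq> 0" "f c = 0"
    using linear_kernel_nontrivial assms(2) by blast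
  have "L w c = 0" if "w \<in> B" for w
  proof -
    obtain i where "i < card B" "w = enum i" using enum \<open>w \<in> B\<close> by (auto simp: bij_betw_def)
    then show ?thesis using fun_cong[OF c(3), of i] by (simp add: f_def)
  qed
  then show ?thesis using that c by blast
qed

text \<open>In the coordinates of \<open>\<phi>\<close> this is the form with
  \<open>\<langle>e\<^sub>l, e\<^sub>m\<rangle>\<^sub>\<Omega> = qform n (\<phi> l) (\<phi> m) / (2\<pi>i (l - m))\<close> for \<open>l \<noteq> m\<close>.\<close>
definition qform :: "nat \<Rightarrow> (nat \<Rightarrow> complex) \<Rightarrow> (nat \<Rightarrow> complex) \<Rightarrow> complex" where
  "qform n v w = (\<Sum>j<n. cnj (v (n + j)) * w (n + j) - cnj (v j) * w j)"

lemma subspace_qform_right_zero: "CV.subspace {w. qform n v w = 0}"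
  unfolding CV.subspace_def qform_def
  by (auto simp: cscale_def algebra_simps sum.distrib sum_distrib_left[symmetric] sum_subtractf)

lemma subspace_qform_left_zero: "CV.subspace {v. qform n v w = 0}"
  unfolding CV.subspace_def qform_def
  by (auto simp: cscale_def algebra_simps sum.distrib sum_distrib_left[symmetric] sum_subtractf)

lemma qform_span_isotropic:
  assumes "\<And>v w. v \<in> S \<Longrightarrow> w \<in> S \<Longrightarrow> qform n v w = 0" "v \<in> CV.span S" "w \<in> CV.span S"
  shows "qform n v w = 0"
proof -
  have "\<forall>w\<in>CV.span S. qform n v w = 0" if "v \<in> S" for v
    using CV.span_induct[OF _ subspace_qform_right_zero] assms(1) that by blast
  then have "\<forall>v\<in>CV.span S. qform n v w = 0"
    using CV.span_induct[OF _ subspace_qform_left_zero] assms(3) by blast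
  then show ?thesis using assms(2) by blast
qed

lemma qform_diag: "qform n v v = of_real (\<Sum>j<n. (cmod (v (n + j)))\<^sup>2 - (cmod (v j))\<^sup>2)"
  unfolding qform_def of_real_sum
  by (intro sum.cong) (simp_all add: complex_norm_square mult.commute flip: of_real_power)

text \<open>The form has signature \<open>(n, n)\<close>: on a totally isotropic subspace the first \<open>n\<close> coordinates
  determine the last \<open>n\<close>, so projecting to them is injective.\<close>
lemma card_isotropic_independent_le:
  assumes "finite X" "CV.independent X" "X \<subseteq> supported (2 * n)"
    and isotropic: "\<And>v w. v \<in> X \<Longrightarrow> w \<in> X \<Longrightarrow> qform n v w = 0"
  shows "card X \<le> n"
proof (rule card_independent_le_if_linear_inj[OF assms(1,2)])
  let ?p = "\<lambda>v k. if k < n then v k else 0"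
  show "Vector_Spaces.linear cscale cscale ?p"
    unfolding Vector_Spaces.linear_iff by (auto simp: CV.vector_space_axioms cscale_def fun_eq_iff)
  show "?p ` X \<subseteq> supported n" by (auto simp: supported_def)
  fix x assume x: "x \<in> CV.span X" and "?p x = 0"
  then have lo: "x k = 0" if "k < n" for k
    using that fun_cong[OF \<open>?p x = 0\<close>, of k] by simp
  have "of_real (\<Sum>j<n. (cmod (x (n + j)))\<^sup>2) = qform n x x"
    unfolding qform_diag using lo by simp
  also have "\<dots> = 0" using qform_span_isotropic[OF isotropic x x] .
  finally have "(\<Sum>j<n. (cmod (x (n + j)))\<^sup>2) = 0" by (simp only: of_real_eq_0_iff)
  then have hi: "x (n + j) = 0" if "j < n" for j
    using that by (auto simp: sum_nonneg_eq_0_iff)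
  have top: "x k = 0" if "2 * n \<le> k" for k
    using CV.span_minimal[OF assms(3) subspace_supported] x that by (auto simp: supported_def)
  show "x = 0"
  proof
    fix k
    show "x k = 0 k"
      using lo[of k] hi[of "k - n"] top[of k] by (cases "k < n"; cases "k < 2 * n") auto
  qed
qed

section \<open>Square-integrable functions\<close>

definition L2 :: "'a measure \<Rightarrow> ('a \<Rightarrow> complex) \<Rightarrow> bool" where
  "L2 M g \<longleftrightarrow> g \<in> borel_measurable M \<and> integrable M (\<lambda>x. (cmod (g x))\<^sup>2)"

definition L2_inner :: "'a measure \<Rightarrow> ('a \<Rightarrow> complex) \<Rightarrow> ('a \<Rightarrow> complex) \<Rightarrow> complex" where
  "L2_inner M u v = (LINT x|M. u x * cnj (v x))"

definition L2_sqnorm :: "'a measure \<Rightarrow> ('a \<Rightarrow> complex) \<Rightarrow> real" where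
  "L2_sqnorm M u = (LINT x|M. (cmod (u x))\<^sup>2)"

lemma borel_measurable_cnj:
  "f \<in> borel_measurable M \<Longrightarrow> (\<lambda>x. cnj (f x)) \<in> borel_measurable M"
  by (rule measurable_compose[of f M borel cnj borel])
     (auto intro: borel_measurable_continuous_onI continuous_intros)

lemma L2_add:
  assumes "L2 M u" "L2 M v" shows "L2 M (\<lambda>x. u x + v x)"
  unfolding L2_def
proof
  show "(\<lambda>x. u x + v x) \<in> borel_measurable M" using assms by (auto simp: L2_def)
  show "integrable M (\<lambda>x. (cmod (u x + v x))\<^sup>2)"
  proof (rule Bochner_Integration.integrable_bound)
    show "integrable M (\<lambda>x. 2 * (cmod (u x))\<^sup>2 + 2 * (cmod (v x))\<^sup>2)"
      using assms by (auto simp: L2_def)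
    show "(\<lambda>x. (cmod (u x + v x))\<^sup>2) \<in> borel_measurable M" using assms by (auto simp: L2_def)
    show "AE x in M. norm ((cmod (u x + v x))\<^sup>2) \<le> norm (2 * (cmod (u x))\<^sup>2 + 2 * (cmod (v x))\<^sup>2)"
    proof (rule AE_I2)
      fix x
      have "(cmod (u x + v x))\<^sup>2 \<le> (cmod (u x) + cmod (v x))\<^sup>2"
        by (intro power_mono norm_triangle_ineq) auto
      also have "\<dots> \<le> 2 * (cmod (u x))\<^sup>2 + 2 * (cmod (v x))\<^sup>2"
        using sum_squares_bound[of "cmod (u x)" "cmod (v x)"] by (simp add: power2_sum)
      finally show "norm ((cmod (u x + v x))\<^sup>2) \<le> norm (2 * (cmod (u x))\<^sup>2 + 2 * (cmod (v x))\<^sup>2)"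
        by simp
    qed
  qed
qed

lemma L2_mult_left: "L2 M u \<Longrightarrow> L2 M (\<lambda>x. c * u x)"
  by (auto simp: L2_def norm_mult power_mult_distrib)

lemma L2_diff: "L2 M u \<Longrightarrow> L2 M v \<Longrightarrow> L2 M (\<lambda>x. u x - v x)"
  using L2_add[OF _ L2_mult_left, of M u v "-1"] by simp

lemma L2_sum: "(\<And>i. i \<in> F \<Longrightarrow> L2 M (f i)) \<Longrightarrow> L2 M (\<lambda>x. \<Sum>i\<in>F. f i x)"
proof (induction F rule: infinite_finite_induct)
  case (insert i F)
  then show ?case by (simp add: L2_add)
qed (simp_all add: L2_def)

lemma L2_inner_integrable:
  assumes "L2 M u" "L2 M v" shows "integrable M (\<lambda>x. u x * cnj (v x))"
proof (rule Bochner_Integration.integrable_bound)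
  show "integrable M (\<lambda>x. (cmod (u x))\<^sup>2 + (cmod (v x))\<^sup>2)" using assms by (auto simp: L2_def)
  show "(\<lambda>x. u x * cnj (v x)) \<in> borel_measurable M"
    using assms by (auto simp: L2_def intro!: borel_measurable_times borel_measurable_cnj)
  show "AE x in M. norm (u x * cnj (v x)) \<le> norm ((cmod (u x))\<^sup>2 + (cmod (v x))\<^sup>2)"
  proof (rule AE_I2)
    fix x
    have "cmod (u x) * cmod (v x) \<le> (cmod (u x))\<^sup>2 + (cmod (v x))\<^sup>2"
      using sum_squares_bound[of "cmod (u x)" "cmod (v x)"]
        mult_nonneg_nonneg[OF norm_ge_zero norm_ge_zero, of "u x" "v x"] by linarith
    then show "norm (u x * cnj (v x)) \<le> norm ((cmod (u x))\<^sup>2 + (cmod (v x))\<^sup>2)"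
      by (simp add: norm_mult)
  qed
qed

lemma L2_inner_diff_left:
  assumes "L2 M u" "L2 M v" "L2 M w"
  shows "L2_inner M (\<lambda>x. u x - v x) w = L2_inner M u w - L2_inner M v w"
  unfolding L2_inner_def using L2_inner_integrable[OF assms(1,3)] L2_inner_integrable[OF assms(2,3)]
  by (simp add: left_diff_distrib)

lemma L2_inner_sum_left:
  assumes "finite F" "\<And>i. i \<in> F \<Longrightarrow> L2 M (f i)" "L2 M w"
  shows "L2_inner M (\<lambda>x. \<Sum>i\<in>F. c i * f i x) w = (\<Sum>i\<in>F. c i * L2_inner M (f i) w)"
proof -
  have "L2_inner M (\<lambda>x. \<Sum>i\<in>F. c i * f i x) w = (LINT x|M. (\<Sum>i\<in>F. c i * (f i x * cnj (w x))))"
    unfolding L2_inner_def by (simp add: sum_distrib_right mult.assoc)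
  also have "\<dots> = (\<Sum>i\<in>F. c i * L2_inner M (f i) w)"
    unfolding L2_inner_def using assms
    by (subst Bochner_Integration.integral_sum) (auto intro!: Bochner_Integration.integrable_mult_right L2_inner_integrable)
  finally show ?thesis .
qed

lemma L2_inner_commute: "L2_inner M v u = cnj (L2_inner M u v)"
  unfolding L2_inner_def Bochner_Integration.integral_cnj[of M "\<lambda>x. u x * cnj (v x)", symmetric]
  by (simp add: mult.commute)

lemma L2_inner_self: "L2_inner M u u = of_real (L2_sqnorm M u)"
  unfolding L2_inner_def L2_sqnorm_def integral_complex_of_real[symmetric]
  by (rule Bochner_Integration.integral_cong) (simp_all flip: complex_norm_square)

lemma increments_geometric_convergent:
  fixes g :: "nat \<Rightarrow> 'a::banach"
  assumes increments: "\<And>k. norm (g (Suc k) - g k) \<le> C * (1/2)^k"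
  shows "convergent g" "norm (g k) \<le> norm (g 0) + 2 * C"
proof -
  have C: "0 \<le> C" using order_trans[OF norm_ge_zero increments[of 0]] by simp
  have telescope: "g k = g 0 + (\<Sum>m<k. g (Suc m) - g m)" for k
    by (simp add: sum_lessThan_telescope)
  have "summable (\<lambda>m. norm (g (Suc m) - g m))"
    by (rule summable_comparison_test'[where g = "\<lambda>m. C * (1/2)^m"])
       (use increments in \<open>auto intro: summable_mult summable_geometric\<close>)
  then have "summable (\<lambda>m. g (Suc m) - g m)" by (rule summable_norm_cancel)
  then have "convergent (\<lambda>k. g 0 + (\<Sum>m<k. g (Suc m) - g m))"
    by (intro convergent_add convergent_const) (simp only: summable_iff_convergent)
  then show "convergent g" by (simp only: telescope[symmetric])
  have "norm (g k) \<le> norm (g 0) + norm (\<Sum>m<k. g (Suc m) - g m)"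
    unfolding telescope[of k] by (rule norm_triangle_ineq)
  also have "\<dots> \<le> norm (g 0) + (\<Sum>m<k. norm (g (Suc m) - g m))"
    by (simp add: norm_sum)
  also have "(\<Sum>m<k. norm (g (Suc m) - g m)) \<le> C * (\<Sum>m<k. (1/2)^m)"
    unfolding sum_distrib_left by (intro sum_mono increments)
  also have "\<dots> \<le> C * 2" using C by (intro mult_left_mono) (auto simp: sum_gp_strict)
  finally show "norm (g k) \<le> norm (g 0) + 2 * C" by simp
qed

lemma nn_integral_weighted_sqnorms_finite:
  assumes L2: "\<And>k. L2 M (d k)" and small: "\<And>k. L2_sqnorm M (d k) \<le> (1/16)^k"
  shows "(\<integral>\<^sup>+x. (\<Sum>k. ennreal (4^k * (cmod (d k x))\<^sup>2)) \<partial>M) < \<infinity>"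
proof -
  have [measurable]: "d k \<in> borel_measurable M" for k using L2 by (simp add: L2_def)
  have "(\<integral>\<^sup>+x. (\<Sum>k. ennreal (4^k * (cmod (d k x))\<^sup>2)) \<partial>M)
      = (\<Sum>k. \<integral>\<^sup>+x. ennreal (4^k * (cmod (d k x))\<^sup>2) \<partial>M)"
    by (rule nn_integral_suminf) measurable
  also have "\<dots> = (\<Sum>k. ennreal (4^k * L2_sqnorm M (d k)))"
  proof (rule suminf_cong)
    fix k
    have "integrable M (\<lambda>x. 4^k * (cmod (d k x))\<^sup>2)" using L2[of k] by (simp add: L2_def)
    then show "(\<integral>\<^sup>+x. ennreal (4^k * (cmod (d k x))\<^sup>2) \<partial>M) = ennreal (4^k * L2_sqnorm M (d k))"
      by (subst nn_integral_eq_integral) (auto simp: L2_sqnorm_def)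
  qed
  also have "\<dots> \<le> (\<Sum>k. ennreal ((1/4)^k))"
  proof (intro suminf_le summableI ennreal_leI)
    fix k :: nat
    have "4^k * L2_sqnorm M (d k) \<le> 4^k * (1/16)^k" using small by (intro mult_left_mono) auto
    also have "\<dots> = (1/4)^k" by (simp flip: power_mult_distrib)
    finally show "4^k * L2_sqnorm M (d k) \<le> (1/4)^k" .
  qed
  also have "\<dots> = ennreal (4/3)"
    using geometric_sums[of "1/4::real"] by (intro suminf_ennreal_eq) auto
  finally show ?thesis by (rule le_less_trans) simp
qed

text \<open>The dominating function is \<open>h = \<Sum> 4\<^sup>k |d\<^sub>k|\<^sup>2\<close>.\<close>
lemma L2_geometric_increments_dominated:
  assumes L2: "\<And>k. L2 M (d k)" and small: "\<And>k. L2_sqnorm M (d k) \<le> (1/16)^k"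
  obtains h where "integrable M h" "\<And>x. 0 \<le> h x"
    "AE x in M. \<forall>k. cmod (d k x) \<le> sqrt (h x) * (1/2)^k"
proof -
  have [measurable]: "d k \<in> borel_measurable M" for k using L2 by (simp add: L2_def)
  define D where "D k x = ennreal (4^k * (cmod (d k x))\<^sup>2)" for k x
  define H where "H x = (\<Sum>k. D k x)" for x
  have H_meas[measurable]: "H \<in> borel_measurable M" unfolding H_def D_def by measurable
  have H_finite: "(\<integral>\<^sup>+x. H x \<partial>M) < \<infinity>"
    unfolding H_def D_def by (rule nn_integral_weighted_sqnorms_finite[OF L2 small])
  define h where "h x = enn2real (H x)" for x
  have h_nonneg: "0 \<le> h x" for x by (simp add: h_def)
  have h_int: "integrable M h"
  proof (rule integrableI_nonneg)
    have "(\<integral>\<^sup>+x. ennreal (h x) \<partial>M) \<le> (\<integral>\<^sup>+x. H x \<partial>M)"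
      unfolding h_def by (intro nn_integral_mono) (simp add: ennreal_enn2real_if)
    then show "(\<integral>\<^sup>+x. ennreal (h x) \<partial>M) < \<infinity>" using H_finite by (rule le_less_trans)
    show "h \<in> borel_measurable M" unfolding h_def by measurable
  qed (simp add: h_nonneg)
  have bound: "cmod (d k x) \<le> sqrt (h x) * (1/2)^k" if "H x \<noteq> \<infinity>" for k x
  proof -
    have "D k x \<le> H x"
      unfolding H_def using sum_le_suminf[of "\<lambda>k. D k x" "{k}"] by simp
    also have "H x = ennreal (h x)"
      using that by (simp add: h_def ennreal_enn2real_if)
    finally have "4^k * (cmod (d k x))\<^sup>2 \<le> h x"
      using ennreal_le_iff[OF h_nonneg[of x]] by (simp add: D_def)
    moreover have "(4::real)^k = (2^k)\<^sup>2" by (simp add: power2_eq_square flip: power_mult_distrib)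
    ultimately have "(2^k * cmod (d k x))\<^sup>2 \<le> h x" by (simp only: power_mult_distrib)
    then have "2^k * cmod (d k x) \<le> sqrt (h x)" by (rule real_le_rsqrt)
    then have "cmod (d k x) \<le> sqrt (h x) / 2^k" by (simp add: pos_le_divide_eq mult.commute)
    then show ?thesis by (simp add: power_one_over)
  qed
  have "AE x in M. H x \<noteq> \<infinity>"
    by (rule nn_integral_PInf_AE[OF H_meas]) (use H_finite in auto)
  then have "AE x in M. \<forall>k. cmod (d k x) \<le> sqrt (h x) * (1/2)^k"
    by (rule eventually_mono) (use bound in blast)
  with h_int h_nonneg show ?thesis by (rule that)
qed

lemma L2_dominated_limit:
  assumes [measurable]: "\<And>k. g k \<in> borel_measurable M" "gl \<in> borel_measurable M"
    and D: "integrable M D"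
    and pointwise: "AE x in M. (\<lambda>k. g k x) \<longlonglongrightarrow> gl x \<and> (\<forall>k. (cmod (g k x))\<^sup>2 \<le> D x)"
  shows "L2 M gl" and "\<And>v. L2 M v \<Longrightarrow> (\<lambda>k. L2_inner M (g k) v) \<longlonglongrightarrow> L2_inner M gl v"
proof -
  have gl_D: "AE x in M. (cmod (gl x))\<^sup>2 \<le> D x"
    using pointwise
  proof eventually_elim
    case (elim x)
    then have "(\<lambda>k. (cmod (g k x))\<^sup>2) \<longlonglongrightarrow> (cmod (gl x))\<^sup>2" by (intro tendsto_intros) auto
    then show ?case using elim by (intro LIMSEQ_le_const2) auto
  qed
  show "L2 M gl"
    unfolding L2_def
  proof
    show "integrable M (\<lambda>x. (cmod (gl x))\<^sup>2)"
      by (rule Bochner_Integration.integrable_bound[OF D]) (use gl_D in \<open>auto elim: eventually_mono\<close>)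
  qed measurable
  fix v assume v: "L2 M v"
  have [measurable]: "v \<in> borel_measurable M" using v by (simp add: L2_def)
  have [measurable]: "(\<lambda>x. cnj (v x)) \<in> borel_measurable M" by (rule borel_measurable_cnj) measurable
  show "(\<lambda>k. L2_inner M (g k) v) \<longlonglongrightarrow> L2_inner M gl v"
    unfolding L2_inner_def
  proof (rule integral_dominated_convergence[where w = "\<lambda>x. D x + (cmod (v x))\<^sup>2"])
    show "integrable M (\<lambda>x. D x + (cmod (v x))\<^sup>2)" using D v by (simp add: L2_def)
    show "AE x in M. (\<lambda>k. g k x * cnj (v x)) \<longlonglongrightarrow> gl x * cnj (v x)"
      using pointwise by eventually_elim (simp add: tendsto_mult_right)
    show "AE x in M. norm (g k x * cnj (v x)) \<le> D x + (cmod (v x))\<^sup>2" for k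
      using pointwise
    proof eventually_elim
      case (elim x)
      have "cmod (g k x) * cmod (v x) \<le> (cmod (g k x))\<^sup>2 + (cmod (v x))\<^sup>2"
        using sum_squares_bound[of "cmod (g k x)" "cmod (v x)"]
          mult_nonneg_nonneg[OF norm_ge_zero norm_ge_zero, of "g k x" "v x"] by linarith
      moreover have "(cmod (g k x))\<^sup>2 \<le> D x" using elim by blast
      ultimately show ?case by (simp add: norm_mult)
    qed
  qed measurable
qed

lemma L2_geometric_cauchy_limit:
  assumes L2: "\<And>k. L2 M (g k)" and small: "\<And>k. L2_sqnorm M (\<lambda>x. g (Suc k) x - g k x) \<le> (1/16)^k"
  obtains gl where "L2 M gl" "\<And>v. L2 M v \<Longrightarrow> (\<lambda>k. L2_inner M (g k) v) \<longlonglongrightarrow> L2_inner M gl v"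
proof -
  have g_meas[measurable]: "g k \<in> borel_measurable M" for k using L2 by (simp add: L2_def)
  have increments_L2: "L2 M (\<lambda>x. g (Suc k) x - g k x)" for k by (intro L2_diff L2)
  obtain h where h: "integrable M h" "\<And>x. 0 \<le> h x"
    and increments: "AE x in M. \<forall>k. cmod (g (Suc k) x - g k x) \<le> sqrt (h x) * (1/2)^k"
    using L2_geometric_increments_dominated[of M "\<lambda>k x. g (Suc k) x - g k x", OF increments_L2 small]
    by blast
  define gl where "gl x = lim (\<lambda>k. g k x)" for x
  define D where "D = (\<lambda>x. 2 * (cmod (g 0 x))\<^sup>2 + 8 * h x)"
  have gl_meas: "gl \<in> borel_measurable M" unfolding gl_def by measurable
  have D: "integrable M D" using L2[of 0] h(1) by (simp add: D_def L2_def)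
  have pointwise: "AE x in M. (\<lambda>k. g k x) \<longlonglongrightarrow> gl x \<and> (\<forall>k. (cmod (g k x))\<^sup>2 \<le> D x)"
    using increments
  proof eventually_elim
    case (elim x)
    then have "norm (g (Suc k) x - g k x) \<le> sqrt (h x) * (1/2)^k" for k by blast
    note convergent = increments_geometric_convergent[OF this]
    have "(cmod (g k x))\<^sup>2 \<le> (cmod (g 0 x) + 2 * sqrt (h x))\<^sup>2" for k
      using convergent(2)[of k] by (intro power_mono) auto
    also have "\<dots> \<le> D x" for k
      using sum_squares_bound[of "cmod (g 0 x)" "2 * sqrt (h x)"] h(2)[of x]
      by (simp add: D_def power2_sum power_mult_distrib)
    finally show ?case using convergent(1) by (simp add: gl_def convergent_LIMSEQ_iff)
  qed
  show ?thesis using L2_dominated_limit[OF g_meas gl_meas D pointwise] by (rule that)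
qed

section \<open>Complete orthonormal systems\<close>

text \<open>The rate \<open>16\<^sup>-\<^sup>k\<close> gives the residuals in the proof of Parseval below increments of
  \<open>L\<^sup>2\<close>-norm \<open>4\<^sup>-\<^sup>k\<close>.\<close>
lemma finite_sums_exhaustion:
  fixes p :: "'i \<Rightarrow> real"
  assumes nonneg: "\<And>i. 0 \<le> p i" and bounded: "\<And>F. finite F \<Longrightarrow> F \<subseteq> I \<Longrightarrow> sum p F \<le> B"
  obtains F where "\<And>k. finite (F k)" "\<And>k. F k \<subseteq> I" "incseq F"
    "\<And>k. sum p (F (Suc k) - F k) \<le> (1/16)^k" "\<And>i. i \<in> I \<Longrightarrow> \<forall>k. i \<notin> F k \<Longrightarrow> p i = 0"
proof -
  define s where "s = (SUP F\<in>{F. finite F \<and> F \<subseteq> I}. sum p F)"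
  have bdd: "bdd_above (sum p ` {F. finite F \<and> F \<subseteq> I})"
    using bounded unfolding bdd_above_def by auto
  have upper: "sum p F \<le> s" if "finite F" "F \<subseteq> I" for F
    unfolding s_def using bdd that by (intro cSup_upper) auto
  have "\<exists>G. finite G \<and> G \<subseteq> I \<and> s - (1/16)^k < sum p G" for k :: nat
    using less_cSUP_iff[OF _ bdd, of "s - (1/16)^k"] unfolding s_def by auto
  then obtain G where G: "\<And>k. finite (G k)" "\<And>k. G k \<subseteq> I" "\<And>k. s - (1/16)^k < sum p (G k)"
    by metis
  define F where "F k = (\<Union>m\<le>k. G m)" for k
  have fin: "finite (F k)" and sub: "F k \<subseteq> I" for k using G by (auto simp: F_def)
  have mono: "incseq F" unfolding F_def by (intro monoI UN_mono) auto
  have close: "s - (1/16)^k < sum p (F k)" for k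
  proof -
    have "sum p (G k) \<le> sum p (F k)" using fin nonneg by (intro sum_mono2) (auto simp: F_def)
    then show ?thesis using G(3)[of k] by linarith
  qed
  show ?thesis
  proof
    show "sum p (F (Suc k) - F k) \<le> (1/16)^k" for k
      using close[of k] upper[OF fin sub, of "Suc k"] mono[THEN monoD, of k "Suc k"]
      by (simp add: sum_diff fin)
    show "p i = 0" if "i \<in> I" "\<forall>k. i \<notin> F k" for i
    proof (rule ccontr)
      assume "p i \<noteq> 0"
      then obtain k where k: "(1/16::real)^k < p i"
        using real_arch_pow_inv[of "p i" "1/16"] nonneg[of i] by auto
      have "sum p (F k) + p i \<le> s" using upper[of "insert i (F k)"] fin sub that by simp
      then show False using close[of k] k by linarith
    qed
  qed (use fin sub mono in auto)
qed

locale complete_orthonormal_system =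
  fixes M :: "'a measure" and I :: "'i set" and E :: "'i \<Rightarrow> 'a \<Rightarrow> complex"
  assumes L2_basis: "\<And>i. i \<in> I \<Longrightarrow> L2 M (E i)"
    and orthonormal: "\<And>i j. i \<in> I \<Longrightarrow> j \<in> I \<Longrightarrow> L2_inner M (E i) (E j) = (if i = j then 1 else 0)"
    and complete: "\<And>g. L2 M g \<Longrightarrow> (\<And>i. i \<in> I \<Longrightarrow> L2_inner M g (E i) = 0) \<Longrightarrow> AE x in M. g x = 0"
begin

lemma L2_inner_finite_expansion:
  assumes "finite F" "F \<subseteq> I" "j \<in> I"
  shows "L2_inner M (\<lambda>x. \<Sum>i\<in>F. c i * E i x) (E j) = (if j \<in> F then c j else 0)"
proof -
  have "L2_inner M (\<lambda>x. \<Sum>i\<in>F. c i * E i x) (E j) = (\<Sum>i\<in>F. c i * L2_inner M (E i) (E j))"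
    using assms by (intro L2_inner_sum_left) (auto intro: L2_basis)
  also have "\<dots> = (\<Sum>i\<in>F. if i = j then c i else 0)"
  proof (rule sum.cong)
    fix i assume "i \<in> F"
    then have "i \<in> I" using assms(2) by blast
    then show "c i * L2_inner M (E i) (E j) = (if i = j then c i else 0)"
      using assms(3) by (simp add: orthonormal)
  qed simp
  finally show ?thesis using assms(1) by simp
qed

lemma L2_sqnorm_finite_expansion:
  assumes "finite F" "F \<subseteq> I"
  shows "L2_sqnorm M (\<lambda>x. \<Sum>i\<in>F. c i * E i x) = (\<Sum>i\<in>F. (cmod (c i))\<^sup>2)"
proof -
  let ?P = "\<lambda>x. \<Sum>i\<in>F. c i * E i x"
  have "L2 M ?P" using assms by (intro L2_sum L2_mult_left L2_basis) auto
  then have "complex_of_real (L2_sqnorm M ?P) = (\<Sum>i\<in>F. c i * L2_inner M (E i) ?P)"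
    unfolding L2_inner_self[symmetric] using assms by (intro L2_inner_sum_left) (auto intro: L2_basis)
  also have "\<dots> = (\<Sum>i\<in>F. c i * cnj (c i))"
  proof (intro sum.cong refl)
    fix i assume "i \<in> F"
    then have "i \<in> I" using assms(2) by blast
    then show "c i * L2_inner M (E i) ?P = c i * cnj (c i)"
      using \<open>i \<in> F\<close> by (subst L2_inner_commute) (simp add: L2_inner_finite_expansion[OF assms])
  qed
  also have "\<dots> = of_real (\<Sum>i\<in>F. (cmod (c i))\<^sup>2)"
    by (simp add: complex_norm_square flip: of_real_power)
  finally show ?thesis by (simp only: of_real_eq_iff)
qed

definition residual :: "'i set \<Rightarrow> ('a \<Rightarrow> complex) \<Rightarrow> 'a \<Rightarrow> complex" where
  "residual F f x = f x - (\<Sum>i\<in>F. L2_inner M f (E i) * E i x)"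

lemma L2_expansion:
  assumes "F \<subseteq> I" shows "L2 M (\<lambda>x. \<Sum>i\<in>F. c i * E i x)"
  using assms by (intro L2_sum L2_mult_left L2_basis) auto

lemma L2_residual: "L2 M f \<Longrightarrow> F \<subseteq> I \<Longrightarrow> L2 M (residual F f)"
  unfolding residual_def[abs_def] by (intro L2_diff L2_expansion)

lemma L2_inner_residual_basis:
  assumes "L2 M f" "finite F" "F \<subseteq> I" "i \<in> I"
  shows "L2_inner M (residual F f) (E i) = (if i \<in> F then 0 else L2_inner M f (E i))"
proof -
  have "L2_inner M (residual F f) (E i)
      = L2_inner M f (E i) - L2_inner M (\<lambda>x. \<Sum>j\<in>F. L2_inner M f (E j) * E j x) (E i)"
    unfolding residual_def[abs_def] using assms by (intro L2_inner_diff_left L2_expansion L2_basis)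
  then show ?thesis using assms by (simp add: L2_inner_finite_expansion)
qed

lemma L2_inner_residual_self:
  assumes "L2 M f" "finite F" "F \<subseteq> I"
  shows "L2_inner M (residual F f) f = of_real (L2_sqnorm M f - (\<Sum>i\<in>F. (cmod (L2_inner M f (E i)))\<^sup>2))"
proof -
  have "L2_inner M (residual F f) f
      = L2_inner M f f - L2_inner M (\<lambda>x. \<Sum>i\<in>F. L2_inner M f (E i) * E i x) f"
    unfolding residual_def[abs_def] using assms by (intro L2_inner_diff_left L2_expansion)
  also have "L2_inner M (\<lambda>x. \<Sum>i\<in>F. L2_inner M f (E i) * E i x) f
      = (\<Sum>i\<in>F. L2_inner M f (E i) * L2_inner M (E i) f)"
    using assms by (intro L2_inner_sum_left) (auto intro: L2_basis)
  also have "\<dots> = (\<Sum>i\<in>F. of_real ((cmod (L2_inner M f (E i)))\<^sup>2))"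
    by (simp add: L2_inner_commute[of M "E _" f] complex_norm_square flip: of_real_power)
  finally show ?thesis by (simp add: L2_inner_self)
qed

lemma L2_sqnorm_residual_diff:
  assumes "finite G" "F \<subseteq> G" "G \<subseteq> I"
  shows "L2_sqnorm M (\<lambda>x. residual G f x - residual F f x) = (\<Sum>i\<in>G - F. (cmod (L2_inner M f (E i)))\<^sup>2)"
proof -
  have "(\<lambda>x. residual G f x - residual F f x) = (\<lambda>x. \<Sum>i\<in>G - F. (- L2_inner M f (E i)) * E i x)"
    using assms by (auto simp: residual_def fun_eq_iff sum.subset_diff[of F G] sum_negf)
  moreover have "G - F \<subseteq> I" using assms(3) by blast
  ultimately show ?thesis
    using assms(1) L2_sqnorm_finite_expansion[of "G - F" "\<lambda>i. - L2_inner M f (E i)"] by simp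
qed

text \<open>The residuals along an exhausting chain of finite sets form a Cauchy sequence whose
  \<open>L\<^sup>2\<close> limit is orthogonal to every \<open>E i\<close>, hence vanishes by completeness.\<close>
lemma L2_sqnorm_le_if_Bessel_sums_le:
  assumes f: "L2 M f"
    and bounded: "\<And>F. finite F \<Longrightarrow> F \<subseteq> I \<Longrightarrow> (\<Sum>i\<in>F. (cmod (L2_inner M f (E i)))\<^sup>2) \<le> B"
  shows "L2_sqnorm M f \<le> B"
proof -
  let ?c = "\<lambda>i. L2_inner M f (E i)"
  obtain F where fin: "\<And>k. finite (F k)" and sub: "\<And>k. F k \<subseteq> I" and mono: "incseq F"
    and small: "\<And>k. (\<Sum>i\<in>F (Suc k) - F k. (cmod (?c i))\<^sup>2) \<le> (1/16)^k"
    and outside: "\<And>i. i \<in> I \<Longrightarrow> \<forall>k. i \<notin> F k \<Longrightarrow> ?c i = 0"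
    using finite_sums_exhaustion[of "\<lambda>i. (cmod (?c i))\<^sup>2" I B] bounded by auto
  define g where "g k = residual (F k) f" for k
  have "L2_sqnorm M (\<lambda>x. g (Suc k) x - g k x) \<le> (1/16)^k" for k
    unfolding g_def using fin sub mono[THEN monoD, of k "Suc k"] small
    by (simp add: L2_sqnorm_residual_diff)
  then obtain gl where gl: "L2 M gl"
    and lim: "\<And>v. L2 M v \<Longrightarrow> (\<lambda>k. L2_inner M (g k) v) \<longlonglongrightarrow> L2_inner M gl v"
    using L2_geometric_cauchy_limit[of M g] f sub by (auto simp: g_def L2_residual)
  have "L2_inner M gl (E i) = 0" if i: "i \<in> I" for i
  proof -
    have "(\<lambda>k. L2_inner M (g k) (E i)) \<longlonglongrightarrow> 0"
    proof (cases "\<exists>k. i \<in> F k")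
      case True
      then obtain k0 where "i \<in> F k0" by blast
      then have "\<forall>k\<ge>k0. L2_inner M (g k) (E i) = 0"
        using mono f fin sub i by (auto simp: incseq_def g_def L2_inner_residual_basis)
      then show ?thesis by (intro tendsto_eventually eventually_sequentiallyI) auto
    qed (use f fin sub i outside[OF i] in \<open>simp add: g_def L2_inner_residual_basis\<close>)
    with lim[OF L2_basis[OF i]] show ?thesis using LIMSEQ_unique by blast
  qed
  then have "AE x in M. gl x = 0" by (rule complete[OF gl])
  then have "L2_inner M gl f = 0"
    unfolding L2_inner_def by (intro integral_eq_zero_AE) (auto elim: eventually_mono)
  then have lim_Bessel: "(\<lambda>k. L2_sqnorm M f - (\<Sum>i\<in>F k. (cmod (?c i))\<^sup>2)) \<longlonglongrightarrow> 0"
    using tendsto_Re[OF lim[OF f]] f fin sub by (simp add: g_def L2_inner_residual_self)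
  have "\<forall>k\<ge>0. L2_sqnorm M f - B \<le> L2_sqnorm M f - (\<Sum>i\<in>F k. (cmod (?c i))\<^sup>2)"
    using bounded[OF fin sub] by simp
  then have "L2_sqnorm M f - B \<le> 0" by (rule LIMSEQ_le_const[OF lim_Bessel exI])
  then show ?thesis by simp
qed

end

section \<open>Exponentials\<close>

lemma expo_add: "expo (s + t) x = expo s x * expo t x"
  unfolding expo_def by (simp add: algebra_simps flip: exp_add)

lemma cnj_expo: "cnj (expo t x) = expo (- t) x"
  unfolding expo_def by (simp add: exp_cnj)

lemma expo_mult_cnj: "expo l x * cnj (expo m x) = expo (l - m) x"
  unfolding cnj_expo expo_add[symmetric] by simp

lemma norm_expo [simp]: "cmod (expo t x) = 1"
proof -
  have "expo t x = exp (\<i> * of_real (2 * pi * t * x))" unfolding expo_def by (simp add: algebra_simps)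
  then show ?thesis by (simp only: norm_exp_i_times)
qed

lemma continuous_on_expo: "continuous_on S (expo t)"
  unfolding expo_def by (intro continuous_intros)

lemma integral_expo:
  assumes "t \<noteq> 0" "a \<le> b"
  shows "integral {a..b} (expo t) = (expo t b - expo t a) / (2 * of_real pi * \<i> * of_real t)"
proof -
  define C where "C = 2 * of_real pi * \<i> * (of_real t :: complex)"
  have "C \<noteq> 0" using assms by (simp add: C_def)
  have e: "expo t = (\<lambda>x. exp (C * of_real x))" by (simp add: fun_eq_iff expo_def C_def mult.assoc)
  have "((\<lambda>x. exp (C * of_real x) / C) has_vector_derivative exp (C * of_real x)) (at x within {a..b})" for x
    using \<open>C \<noteq> 0\<close> by (intro has_vector_derivative_real_field) (auto intro!: derivative_eq_intros)
  from fundamental_theorem_of_calculus[OF assms(2) this]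
  show ?thesis unfolding e C_def[symmetric] by (simp add: integral_unique diff_divide_distrib)
qed

lemma norm_expo_minus_one: "cmod (expo t x - 1) \<le> 2 * pi * \<bar>t\<bar> * \<bar>x\<bar>"
proof -
  have "expo t x = exp (\<i> * of_real (2 * pi * t * x))" unfolding expo_def by (simp add: algebra_simps)
  then have "cmod (expo t x - 1) = 2 * \<bar>sin (2 * pi * t * x / 2)\<bar>" by (simp only: dist_exp_i_1)
  also have "\<dots> \<le> 2 * \<bar>2 * pi * t * x / 2\<bar>" using abs_sin_x_le_abs_x by simp
  also have "\<dots> = 2 * pi * \<bar>t\<bar> * \<bar>x\<bar>" by (simp add: abs_mult)
  finally show ?thesis .
qed

lemma phi_lower: "k < n \<Longrightarrow> phi n a b l k = expo (- l) (a k)"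
  unfolding phi_def expo_def by (simp add: algebra_simps)

lemma phi_upper: "j < n \<Longrightarrow> phi n a b l (n + j) = expo (- l) (b j)"
  unfolding phi_def expo_def by (simp add: algebra_simps)

lemma phi_in_supported: "phi n a b l \<in> supported (2 * n)"
  unfolding phi_def supported_def by simp

lemma qform_phi:
  "qform n (phi n a b l) (phi n a b m) = (\<Sum>j<n. expo (l - m) (b j) - expo (l - m) (a j))"
  unfolding qform_def
  by (intro sum.cong) (simp_all add: phi_lower phi_upper cnj_expo flip: expo_add)

section \<open>Separated sets of reals\<close>

lemma separated_window_finite:
  fixes L :: "real set"
  assumes sep: "\<And>l m. l \<in> L \<Longrightarrow> m \<in> L \<Longrightarrow> l \<noteq> m \<Longrightarrow> \<delta> \<le> \<bar>l - m\<bar>" and "0 < \<delta>"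
  shows "finite (L \<inter> {x<..<y})"
proof -
  let ?f = "\<lambda>l. \<lfloor>l / \<delta>\<rfloor>"
  have "inj_on ?f (L \<inter> {x<..<y})"
  proof (rule inj_onI)
    fix l m assume l: "l \<in> L \<inter> {x<..<y}" and m: "m \<in> L \<inter> {x<..<y}" and "?f l = ?f m"
    then have "\<bar>l / \<delta> - m / \<delta>\<bar> < 1" by linarith
    then have "\<bar>l - m\<bar> < \<delta>"
      using \<open>0 < \<delta>\<close> by (simp add: diff_divide_distrib[symmetric] abs_divide divide_less_eq)
    then show "l = m" using sep l m by force
  qed
  moreover have "?f ` (L \<inter> {x<..<y}) \<subseteq> {\<lfloor>x / \<delta>\<rfloor>..\<lfloor>y / \<delta>\<rfloor>}"
    using \<open>0 < \<delta>\<close> by (auto intro!: floor_mono divide_right_mono)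
  then have "finite (?f ` (L \<inter> {x<..<y}))" by (rule finite_subset) simp
  ultimately show ?thesis by (blast dest: finite_imageD)
qed

lemma separated_shell_card_le:
  fixes L :: "real set"
  assumes sep: "\<And>l m. l \<in> L \<Longrightarrow> m \<in> L \<Longrightarrow> l \<noteq> m \<Longrightarrow> \<delta> \<le> \<bar>l - m\<bar>"
    and "finite F" "F \<subseteq> L" "0 < r"
  shows "card {l\<in>F. r \<le> \<bar>l - \<xi>\<bar> \<and> \<bar>l - \<xi>\<bar> < r + \<delta>} \<le> 2"
proof -
  let ?S = "{l\<in>F. r \<le> \<bar>l - \<xi>\<bar> \<and> \<bar>l - \<xi>\<bar> < r + \<delta>}"
  have side: "card {l\<in>?S. 0 < s * (l - \<xi>)} \<le> 1" if s: "s = 1 \<or> s = -1" for s :: real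
  proof -
    let ?T = "{l\<in>?S. 0 < s * (l - \<xi>)}"
    have "\<forall>l1\<in>?T. \<forall>l2\<in>?T. l1 = l2"
    proof (intro ballI)
      fix l1 l2 assume l1: "l1 \<in> ?T" and l2: "l2 \<in> ?T"
      have "\<bar>l1 - \<xi>\<bar> = s * (l1 - \<xi>)" "\<bar>l2 - \<xi>\<bar> = s * (l2 - \<xi>)" using l1 l2 s by auto
      then have "\<bar>l1 - l2\<bar> = \<bar>\<bar>l1 - \<xi>\<bar> - \<bar>l2 - \<xi>\<bar>\<bar>" using s by auto
      also have "\<dots> < \<delta>" using l1 l2 by auto
      finally show "l1 = l2" using sep l1 l2 \<open>F \<subseteq> L\<close> by force
    qed
    moreover have "finite ?T" using \<open>finite F\<close> by simp
    ultimately show ?thesis by (simp only: One_nat_def card_le_Suc0_iff_eq)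
  qed
  have "?S \<subseteq> {l\<in>?S. 0 < 1 * (l - \<xi>)} \<union> {l\<in>?S. 0 < -1 * (l - \<xi>)}"
    using \<open>0 < r\<close> by auto
  then have "card ?S \<le> card ({l\<in>?S. 0 < 1 * (l - \<xi>)} \<union> {l\<in>?S. 0 < -1 * (l - \<xi>)})"
    using \<open>finite F\<close> by (intro card_mono) auto
  also have "\<dots> \<le> card {l\<in>?S. 0 < 1 * (l - \<xi>)} + card {l\<in>?S. 0 < -1 * (l - \<xi>)}"
    by (rule card_Un_le)
  also have "\<dots> \<le> 2" using side[of 1] side[of "-1"] by simp
  finally show ?thesis .
qed

lemma inverse_square_shells_le:
  assumes "0 < \<delta>" "\<delta> < R"
  shows "(\<Sum>i<N. 1 / (R + real i * \<delta>)\<^sup>2) \<le> 1 / (\<delta> * (R - \<delta>))"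
proof -
  define f where "f i = 1 / (\<delta> * (R - \<delta> + real i * \<delta>))" for i :: nat
  have telescope: "1 / (R + real i * \<delta>)\<^sup>2 \<le> f i - f (Suc i)" for i
  proof -
    define A where "A = R - \<delta> + real i * \<delta>"
    have "0 < A" using assms by (simp add: A_def add_pos_nonneg)
    have "f i - f (Suc i) = 1 / (\<delta> * A) - 1 / (\<delta> * (A + \<delta>))"
      by (simp add: f_def A_def algebra_simps)
    also have "\<dots> = (\<delta> * (A + \<delta>) - \<delta> * A) / ((\<delta> * A) * (\<delta> * (A + \<delta>)))"
      using \<open>0 < A\<close> assms by (simp add: diff_frac_eq)
    also have "\<dots> = (\<delta> * \<delta>) / ((\<delta> * \<delta>) * (A * (A + \<delta>)))" by (simp add: algebra_simps)
    also have "\<dots> = 1 / (A * (A + \<delta>))" using \<open>0 < A\<close> assms by simp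
    finally have "f i - f (Suc i) = 1 / (A * (A + \<delta>))" .
    moreover have "1 / (R + real i * \<delta>)\<^sup>2 = 1 / ((A + \<delta>) * (A + \<delta>))"
      by (simp add: A_def power2_eq_square)
    ultimately show ?thesis
      using \<open>0 < A\<close> assms by (simp add: frac_le mult_right_mono)
  qed
  have "(\<Sum>i<N. 1 / (R + real i * \<delta>)\<^sup>2) \<le> (\<Sum>i<N. f i - f (Suc i))"
    by (intro sum_mono telescope)
  also have "\<dots> = f 0 - f N" by (rule sum_lessThan_telescope')
  also have "\<dots> \<le> f 0" using assms by (simp add: f_def add_pos_nonneg less_imp_le)
  finally show ?thesis by (simp add: f_def)
qed

text \<open>Sorting the points by the shell \<open>R + k\<delta> \<le> |l - \<xi>| < R + (k+1)\<delta>\<close> they lie in: each shell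
  holds at most two of them.\<close>
lemma separated_inverse_square_sum_le:
  fixes L :: "real set"
  assumes sep: "\<And>l m. l \<in> L \<Longrightarrow> m \<in> L \<Longrightarrow> l \<noteq> m \<Longrightarrow> \<delta> \<le> \<bar>l - m\<bar>"
    and "0 < \<delta>" "2 * \<delta> \<le> R" and F: "finite F" "F \<subseteq> L" and far: "\<And>l. l \<in> F \<Longrightarrow> R \<le> \<bar>l - \<xi>\<bar>"
  shows "(\<Sum>l\<in>F. 1 / (l - \<xi>)\<^sup>2) \<le> 4 / (\<delta> * R)"
proof -
  define k where "k l = nat \<lfloor>(\<bar>l - \<xi>\<bar> - R) / \<delta>\<rfloor>" for l
  define u where "u i = 1 / (R + real i * \<delta>)\<^sup>2" for i :: nat
  have shell: "R + real (k l) * \<delta> \<le> \<bar>l - \<xi>\<bar> \<and> \<bar>l - \<xi>\<bar> < R + real (k l) * \<delta> + \<delta>" if "l \<in> F" for l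
  proof -
    define q where "q = (\<bar>l - \<xi>\<bar> - R) / \<delta>"
    have "0 \<le> q" using far[OF that] \<open>0 < \<delta>\<close> by (simp add: q_def)
    then have "real (k l) = of_int \<lfloor>q\<rfloor>" by (simp add: k_def q_def[symmetric])
    moreover have "\<bar>l - \<xi>\<bar> = R + q * \<delta>" using \<open>0 < \<delta>\<close> by (simp add: q_def)
    moreover have "of_int \<lfloor>q\<rfloor> * \<delta> \<le> q * \<delta>" "q * \<delta> < (of_int \<lfloor>q\<rfloor> + 1) * \<delta>"
      using \<open>0 < \<delta>\<close> by (intro mult_right_mono mult_strict_right_mono; linarith)+
    ultimately show ?thesis by (simp add: algebra_simps)
  qed
  have term_le: "1 / (l - \<xi>)\<^sup>2 \<le> u (k l)" if "l \<in> F" for l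
  proof -
    have "0 < R + real (k l) * \<delta>" using assms by (simp add: add_pos_nonneg)
    then have le: "(R + real (k l) * \<delta>)\<^sup>2 \<le> (l - \<xi>)\<^sup>2"
      using shell[OF that] by (metis abs_le_square_iff abs_of_pos)
    moreover have pos: "0 < (R + real (k l) * \<delta>)\<^sup>2" using \<open>0 < R + real (k l) * \<delta>\<close> by simp
    ultimately have "0 < (l - \<xi>)\<^sup>2" by linarith
    with le pos show ?thesis unfolding u_def by (intro divide_left_mono mult_pos_pos) auto
  qed
  have card_shell: "card {l\<in>F. k l = i} \<le> 2" for i
  proof -
    have "{l\<in>F. k l = i} \<subseteq> {l\<in>F. R + real i * \<delta> \<le> \<bar>l - \<xi>\<bar> \<and> \<bar>l - \<xi>\<bar> < R + real i * \<delta> + \<delta>}"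
      using shell by auto
    then have "card {l\<in>F. k l = i}
        \<le> card {l\<in>F. R + real i * \<delta> \<le> \<bar>l - \<xi>\<bar> \<and> \<bar>l - \<xi>\<bar> < R + real i * \<delta> + \<delta>}"
      using F(1) by (intro card_mono) auto
    also have "\<dots> \<le> 2"
      by (rule separated_shell_card_le[OF sep F]) (use assms in \<open>auto intro: add_pos_nonneg\<close>)
    finally show ?thesis .
  qed
  obtain N where N: "k ` F \<subseteq> {..<N}" using finite_nat_bounded[OF finite_imageI[OF F(1)]] by blast
  have "(\<Sum>l\<in>F. 1 / (l - \<xi>)\<^sup>2) \<le> (\<Sum>l\<in>F. u (k l))" by (intro sum_mono term_le)
  also have "\<dots> = (\<Sum>i\<in>k ` F. \<Sum>l\<in>{l\<in>F. k l = i}. u (k l))" by (rule sum.image_gen[OF F(1)])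
  also have "\<dots> = (\<Sum>i\<in>k ` F. real (card {l\<in>F. k l = i}) * u i)"
    by (rule sum.cong) (simp_all add: sum_constant_scale)
  also have "\<dots> \<le> (\<Sum>i\<in>k ` F. 2 * u i)"
  proof (rule sum_mono)
    fix i
    have "real (card {l\<in>F. k l = i}) \<le> 2" using card_shell[of i] by linarith
    then show "real (card {l\<in>F. k l = i}) * u i \<le> 2 * u i" by (rule mult_right_mono) (simp add: u_def)
  qed
  also have "\<dots> \<le> (\<Sum>i<N. 2 * u i)" using N by (intro sum_mono2) (auto simp: u_def)
  also have "\<dots> = 2 * (\<Sum>i<N. 1 / (R + real i * \<delta>)\<^sup>2)" by (simp add: u_def sum_distrib_left)
  also have "\<dots> \<le> 2 / (\<delta> * (R - \<delta>))" using inverse_square_shells_le[of \<delta> R N] assms by simp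
  also have "\<dots> \<le> 2 / (\<delta> * (R / 2))"
    using assms by (intro divide_left_mono mult_left_mono mult_pos_pos) auto
  also have "\<dots> = 4 / (\<delta> * R)" by simp
  finally show ?thesis .
qed

section \<open>Finite unions of intervals\<close>

locale interval_union =
  fixes n :: nat and a b :: "nat \<Rightarrow> real"
  assumes lt: "\<And>j. j < n \<Longrightarrow> a j < b j"
    and disjoint: "\<And>j k. j < n \<Longrightarrow> k < n \<Longrightarrow> j \<noteq> k \<Longrightarrow> {a j<..<b j} \<inter> {a k<..<b k} = {}"
    and total_length: "(\<Sum>j<n. b j - a j) = 1"
begin

definition \<Omega> :: "real set" where
  "\<Omega> = (\<Union>j<n. {a j<..<b j})"

abbreviation M :: "real measure" where
  "M \<equiv> restrict_space lebesgue \<Omega>"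

definition step :: "(nat \<Rightarrow> complex) \<Rightarrow> real \<Rightarrow> complex" where
  "step c x = (\<Sum>j<n. of_real (indicator {a j<..<b j} x) * c j)"

definition radius :: real where
  "radius = (\<Sum>j<n. \<bar>a j\<bar> + \<bar>b j\<bar>) + 1"

lemma sets_\<Omega> [measurable]: "\<Omega> \<in> sets lebesgue"
  unfolding \<Omega>_def by (intro sets.finite_UN) auto

lemma radius_pos: "0 < radius"
  unfolding radius_def by (intro add_nonneg_pos sum_nonneg) auto

lemma endpoints_le_radius:
  assumes "j < n" shows "\<bar>a j\<bar> \<le> radius" "\<bar>b j\<bar> \<le> radius"
proof -
  have "\<bar>a j\<bar> + \<bar>b j\<bar> \<le> (\<Sum>j<n. \<bar>a j\<bar> + \<bar>b j\<bar>)"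
    by (rule member_le_sum) (use assms in auto)
  then show "\<bar>a j\<bar> \<le> radius" "\<bar>b j\<bar> \<le> radius" unfolding radius_def by linarith+
qed

lemma \<Omega>_subset_radius: "\<Omega> \<subseteq> {- radius..radius}"
  unfolding \<Omega>_def using endpoints_le_radius by (fastforce simp: abs_le_iff)

lemma step_eq:
  assumes "j < n" "x \<in> {a j<..<b j}"
  shows "step c x = c j"
proof -
  have "step c x = (\<Sum>k<n. if k = j then c j else 0)"
    unfolding step_def
  proof (rule sum.cong)
    fix k assume "k \<in> {..<n}"
    then have "k \<noteq> j \<Longrightarrow> x \<notin> {a k<..<b k}" using disjoint assms by blast
    then show "of_real (indicator {a k<..<b k} x) * c k = (if k = j then c j else 0)"
      using assms by auto
  qed simp
  then show ?thesis using assms by simp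
qed

lemma step_one: "x \<in> \<Omega> \<Longrightarrow> step (\<lambda>_. 1) x = 1"
  unfolding \<Omega>_def using step_eq by auto

lemma norm_step_le: "cmod (step c x) \<le> (\<Sum>j<n. cmod (c j))"
  unfolding step_def
  by (rule order_trans[OF norm_sum], rule sum_mono) (simp add: norm_mult indicator_def)

lemma borel_measurable_step: "step c \<in> borel_measurable M"
proof -
  have [measurable]: "{a j<..<b j} \<in> sets lebesgue" for j by simp
  have "step c \<in> borel_measurable lebesgue" unfolding step_def[abs_def] by measurable
  then show ?thesis by (rule measurable_restrict_space1)
qed

lemma integrable_continuous:
  fixes g :: "real \<Rightarrow> 'b::euclidean_space"
  assumes "continuous_on UNIV g"
  shows "integrable M g"
proof -
  have "g absolutely_integrable_on {- radius..radius}"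
    using assms by (intro absolutely_integrable_continuous_real) (auto intro: continuous_on_subset)
  then have "set_integrable lebesgue \<Omega> g"
    by (rule set_integrable_subset) (use \<Omega>_subset_radius in auto)
  then show ?thesis
    by (subst integrable_restrict_space) (auto simp: set_integrable_def)
qed

lemma borel_measurable_continuous:
  "continuous_on UNIV (g :: real \<Rightarrow> 'b::euclidean_space) \<Longrightarrow> g \<in> borel_measurable M"
  by (intro measurable_restrict_space1 measurable_completion)
     (simp add: measurable_lborel1 borel_measurable_continuous_onI)

lemma integral_step_mult:
  fixes g :: "real \<Rightarrow> complex"
  assumes g: "continuous_on UNIV g"
  shows "(LINT x|M. step c x * g x) = (\<Sum>j<n. c j * integral {a j..b j} g)"
proof -
  have interval: "set_integrable lebesgue {a j<..<b j} g"
      "(LINT x:{a j<..<b j}|lebesgue. g x) = integral {a j..b j} g" if "j < n" for j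
  proof -
    have "g absolutely_integrable_on {a j..b j}"
      using g by (intro absolutely_integrable_continuous_real) (auto intro: continuous_on_subset)
    then show si: "set_integrable lebesgue {a j<..<b j} g" by (rule set_integrable_subset) auto
    show "(LINT x:{a j<..<b j}|lebesgue. g x) = integral {a j..b j} g"
      using set_lebesgue_integral_eq_integral(2)[OF si] lt[OF that]
      by (simp add: integral_open_interval_real)
  qed
  have "(LINT x|M. step c x * g x) = (LINT x|lebesgue. indicator \<Omega> x *\<^sub>R (step c x * g x))"
    by (rule integral_restrict_space) simp
  also have "\<dots> = (LINT x|lebesgue. (\<Sum>j<n. c j * (indicator {a j<..<b j} x *\<^sub>R g x)))"
  proof (rule Bochner_Integration.integral_cong)
    fix x :: real
    show "indicator \<Omega> x *\<^sub>R (step c x * g x) = (\<Sum>j<n. c j * (indicator {a j<..<b j} x *\<^sub>R g x))"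
    proof (cases "x \<in> \<Omega>")
      case True
      then show ?thesis unfolding step_def
        by (simp add: scaleR_conv_of_real sum_distrib_left sum_distrib_right ac_simps)
    next
      case False
      then have "x \<notin> {a j<..<b j}" if "j < n" for j using that unfolding \<Omega>_def by auto
      then show ?thesis using False by simp
    qed
  qed simp
  also have "\<dots> = (\<Sum>j<n. LINT x|lebesgue. c j * (indicator {a j<..<b j} x *\<^sub>R g x))"
    using interval(1)
    by (intro Bochner_Integration.integral_sum integrable_mult_right) (auto simp: set_integrable_def)
  also have "\<dots> = (\<Sum>j<n. c j * (LINT x:{a j<..<b j}|lebesgue. g x))"
    by (simp only: set_lebesgue_integral_def integral_mult_right_zero)
  also have "\<dots> = (\<Sum>j<n. c j * integral {a j..b j} g)"
    using interval(2) by simp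
  finally show ?thesis .
qed

lemma L2_expo: "L2 M (expo l)"
  unfolding L2_def using continuous_on_expo[of UNIV l]
  by (auto intro: borel_measurable_continuous integrable_continuous[of "\<lambda>_. 1::real", simplified])

lemma L2_inner_expo: "L2_inner M (expo l) (expo m) = (\<Sum>j<n. integral {a j..b j} (expo (l - m)))"
proof -
  have "L2_inner M (expo l) (expo m) = (LINT x|M. step (\<lambda>_. 1) x * expo (l - m) x)"
    unfolding L2_inner_def
    by (rule Bochner_Integration.integral_cong) (simp_all add: space_restrict_space step_one expo_mult_cnj)
  also have "\<dots> = (\<Sum>j<n. integral {a j..b j} (expo (l - m)))"
    by (simp add: integral_step_mult continuous_on_expo)
  finally show ?thesis .
qed

text \<open>The Fourier transform of the indicator of \<open>\<Omega>\<close> stays within \<open>2\<pi>|t| radius\<close> of its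
  value \<open>1\<close> at the origin; orthogonality therefore forces a uniform gap in a spectrum.\<close>
lemma norm_kernel_minus_one:
  "cmod ((\<Sum>j<n. integral {a j..b j} (expo t)) - 1) \<le> 2 * pi * \<bar>t\<bar> * radius"
proof -
  have diff: "integral {a j..b j} (\<lambda>x. expo t x - 1) = integral {a j..b j} (expo t) - of_real (b j - a j)"
    if "j < n" for j
    using lt[OF that]
    by (subst integral_diff) (auto intro!: integrable_continuous_real continuous_on_expo
        simp: integral_const_real content_real scaleR_conv_of_real)
  have "(\<Sum>j<n. integral {a j..b j} (expo t)) - 1
      = (\<Sum>j<n. integral {a j..b j} (expo t)) - of_real (\<Sum>j<n. b j - a j)"
    by (simp only: total_length of_real_1)
  also have "\<dots> = (\<Sum>j<n. integral {a j..b j} (expo t) - of_real (b j - a j))"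
    by (simp add: sum_subtractf of_real_sum)
  also have "\<dots> = (\<Sum>j<n. integral {a j..b j} (\<lambda>x. expo t x - 1))"
    by (intro sum.cong) (simp_all add: diff)
  also have "cmod \<dots> \<le> (\<Sum>j<n. cmod (integral {a j..b j} (\<lambda>x. expo t x - 1)))"
    by (rule norm_sum)
  also have "\<dots> \<le> (\<Sum>j<n. 2 * pi * \<bar>t\<bar> * radius * (b j - a j))"
  proof (rule sum_mono)
    fix j assume "j \<in> {..<n}"
    then have j: "j < n" by simp
    have "norm (integral (cbox (a j) (b j)) (\<lambda>x. expo t x - 1))
        \<le> (2 * pi * \<bar>t\<bar> * radius) * Henstock_Kurzweil_Integration.content (cbox (a j) (b j))"
    proof (rule integrable_bound)
      show "0 \<le> 2 * pi * \<bar>t\<bar> * radius" using radius_pos by simp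
      show "(\<lambda>x. expo t x - 1) integrable_on cbox (a j) (b j)"
        by (auto intro!: integrable_continuous_real continuous_intros continuous_on_expo)
      fix x assume "x \<in> cbox (a j) (b j)"
      then have "\<bar>x\<bar> \<le> radius" using endpoints_le_radius[OF j] by auto
      then have "2 * pi * \<bar>t\<bar> * \<bar>x\<bar> \<le> 2 * pi * \<bar>t\<bar> * radius" by (intro mult_left_mono) auto
      then show "norm (expo t x - 1) \<le> 2 * pi * \<bar>t\<bar> * radius"
        using norm_expo_minus_one[of t x] by linarith
    qed
    then show "cmod (integral {a j..b j} (\<lambda>x. expo t x - 1)) \<le> 2 * pi * \<bar>t\<bar> * radius * (b j - a j)"
      using lt[OF j] by (simp add: content_real)
  qed
  also have "\<dots> = 2 * pi * \<bar>t\<bar> * radius"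
    using total_length by (simp flip: sum_distrib_left)
  finally show ?thesis .
qed

definition modulated_step :: "real \<Rightarrow> (nat \<Rightarrow> complex) \<Rightarrow> real \<Rightarrow> complex" where
  "modulated_step \<xi> c x = expo \<xi> x * step c x"

definition edge_pairing :: "real \<Rightarrow> (nat \<Rightarrow> complex) \<Rightarrow> (nat \<Rightarrow> complex) \<Rightarrow> complex" where
  "edge_pairing \<xi> c w = (\<Sum>j<n. c j * (expo \<xi> (b j) * w (n + j) - expo \<xi> (a j) * w j))"

definition min_length :: real where
  "min_length = Min ((\<lambda>j. b j - a j) ` {..<n})"

lemma n_pos: "0 < n"
  using total_length by (cases n) auto

lemma min_length_pos: "0 < min_length"
  unfolding min_length_def using n_pos lt by (subst Min_gr_iff) auto

lemma min_length_le: "j < n \<Longrightarrow> min_length \<le> b j - a j"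
  unfolding min_length_def by (intro Min_le) auto

lemma L2_modulated_step: "L2 M (modulated_step \<xi> c)"
  unfolding L2_def
proof
  show meas: "modulated_step \<xi> c \<in> borel_measurable M"
    unfolding modulated_step_def[abs_def]
    using borel_measurable_step borel_measurable_continuous[OF continuous_on_expo]
    by (intro borel_measurable_times) auto
  show "integrable M (\<lambda>x. (cmod (modulated_step \<xi> c x))\<^sup>2)"
  proof (rule Bochner_Integration.integrable_bound)
    show "integrable M (\<lambda>x. (\<Sum>j<n. cmod (c j))\<^sup>2)" by (rule integrable_continuous) simp
    show "(\<lambda>x. (cmod (modulated_step \<xi> c x))\<^sup>2) \<in> borel_measurable M" using meas by measurable
    show "AE x in M. norm ((cmod (modulated_step \<xi> c x))\<^sup>2) \<le> norm ((\<Sum>j<n. cmod (c j))\<^sup>2)"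
      by (rule AE_I2) (simp add: modulated_step_def norm_mult power_mono norm_step_le)
  qed
qed

lemma L2_sqnorm_modulated_step:
  "L2_sqnorm M (modulated_step \<xi> c) = (\<Sum>j<n. (cmod (c j))\<^sup>2 * (b j - a j))"
proof -
  have "complex_of_real (L2_sqnorm M (modulated_step \<xi> c)) = (LINT x|M. step (\<lambda>j. c j * cnj (c j)) x * 1)"
    unfolding L2_inner_self[symmetric] L2_inner_def
  proof (rule Bochner_Integration.integral_cong)
    fix x assume "x \<in> space M"
    then obtain j where j: "j < n" "x \<in> {a j<..<b j}" by (auto simp: space_restrict_space \<Omega>_def)
    have "expo \<xi> x * cnj (expo \<xi> x) = 1" using expo_mult_cnj[of \<xi> x \<xi>] by (simp add: expo_def)
    then show "modulated_step \<xi> c x * cnj (modulated_step \<xi> c x) = step (\<lambda>j. c j * cnj (c j)) x * 1"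
      unfolding modulated_step_def step_eq[OF j] by (simp add: ac_simps)
  qed simp
  also have "\<dots> = (\<Sum>j<n. c j * cnj (c j) * integral {a j..b j} (\<lambda>_. 1))"
    by (rule integral_step_mult) simp
  also have "\<dots> = of_real (\<Sum>j<n. (cmod (c j))\<^sup>2 * (b j - a j))"
    unfolding of_real_sum
  proof (rule sum.cong)
    fix j assume "j \<in> {..<n}"
    then have "a j \<le> b j" using lt by (simp add: less_imp_le)
    moreover have "c j * cnj (c j) = of_real ((cmod (c j))\<^sup>2)" by (rule complex_norm_square[symmetric])
    ultimately show "c j * cnj (c j) * integral {a j..b j} (\<lambda>_. 1) = of_real ((cmod (c j))\<^sup>2 * (b j - a j))"
      by (simp add: integral_const_real content_real scaleR_conv_of_real)
  qed simp
  finally show ?thesis by (simp only: of_real_eq_iff)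
qed

lemma sqnorm_modulated_step_ge:
  "min_length * (\<Sum>j<n. (cmod (c j))\<^sup>2) \<le> L2_sqnorm M (modulated_step \<xi> c)"
  unfolding L2_sqnorm_modulated_step sum_distrib_left
proof (rule sum_mono)
  fix j assume "j \<in> {..<n}"
  then have "min_length \<le> b j - a j" by (simp add: min_length_le)
  then show "min_length * (cmod (c j))\<^sup>2 \<le> (cmod (c j))\<^sup>2 * (b j - a j)"
    using mult_left_mono[of min_length "b j - a j" "(cmod (c j))\<^sup>2"] by (simp add: mult.commute)
qed

lemma edge_pairing_phi:
  "edge_pairing \<xi> c (phi n a b l) = (\<Sum>j<n. c j * (expo (\<xi> - l) (b j) - expo (\<xi> - l) (a j)))"
  unfolding edge_pairing_def by (intro sum.cong) (simp_all add: phi_lower phi_upper flip: expo_add)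

lemma edge_pairing_add: "edge_pairing \<xi> (c + d) w = edge_pairing \<xi> c w + edge_pairing \<xi> d w"
  unfolding edge_pairing_def sum.distrib[symmetric] by (rule sum.cong) (simp_all add: algebra_simps)

lemma edge_pairing_cscale: "edge_pairing \<xi> (cscale k c) w = k * edge_pairing \<xi> c w"
  unfolding edge_pairing_def cscale_def sum_distrib_left by (rule sum.cong) (simp_all add: algebra_simps)

lemma subspace_edge_pairing_zero: "CV.subspace {w. edge_pairing \<xi> c w = 0}"
  unfolding CV.subspace_def edge_pairing_def
  by (auto simp: cscale_def algebra_simps sum.distrib sum_distrib_left[symmetric] sum_subtractf)

text \<open>Integrating the exponential over each interval leaves only boundary terms, which is where
  the vectors \<open>\<phi>(l)\<close> enter.\<close>
lemma L2_inner_modulated_step_expo: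
  assumes "\<xi> \<noteq> l"
  shows "L2_inner M (modulated_step \<xi> c) (expo l)
    = edge_pairing \<xi> c (phi n a b l) / (2 * of_real pi * \<i> * of_real (\<xi> - l))"
proof -
  have "L2_inner M (modulated_step \<xi> c) (expo l) = (LINT x|M. step c x * expo (\<xi> - l) x)"
    unfolding L2_inner_def modulated_step_def
    by (rule Bochner_Integration.integral_cong) (simp_all add: expo_mult_cnj[symmetric] ac_simps)
  also have "\<dots> = (\<Sum>j<n. c j * integral {a j..b j} (expo (\<xi> - l)))"
    by (simp add: integral_step_mult continuous_on_expo)
  also have "\<dots> = edge_pairing \<xi> c (phi n a b l) / (2 * of_real pi * \<i> * of_real (\<xi> - l))"
    unfolding edge_pairing_phi sum_divide_distrib
    using assms lt by (intro sum.cong) (auto simp: integral_expo less_imp_le)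
  finally show ?thesis .
qed

lemma norm_L2_inner_modulated_step_expo_le:
  assumes "\<xi> \<noteq> l"
  shows "cmod (L2_inner M (modulated_step \<xi> c) (expo l)) \<le> (\<Sum>j<n. cmod (c j)) / \<bar>l - \<xi>\<bar>"
proof -
  let ?S = "\<Sum>j<n. cmod (c j)"
  have "cmod (c j * (expo (\<xi> - l) (b j) - expo (\<xi> - l) (a j))) \<le> 2 * cmod (c j)" for j
  proof -
    have bound: "cmod (expo (\<xi> - l) (b j) - expo (\<xi> - l) (a j)) \<le> 2"
      using norm_triangle_ineq4[of "expo (\<xi> - l) (b j)" "expo (\<xi> - l) (a j)"] by simp
    show ?thesis using mult_left_mono[OF bound, of "cmod (c j)"] by (simp add: norm_mult mult.commute)
  qed
  then have edge_bound: "cmod (edge_pairing \<xi> c (phi n a b l)) \<le> 2 * ?S"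
    unfolding edge_pairing_phi sum_distrib_left by (intro order_trans[OF norm_sum sum_mono])
  have "cmod (L2_inner M (modulated_step \<xi> c) (expo l))
      = cmod (edge_pairing \<xi> c (phi n a b l)) / (2 * pi * \<bar>l - \<xi>\<bar>)"
    using assms by (simp add: L2_inner_modulated_step_expo norm_divide norm_mult abs_minus_commute
        del: of_real_diff)
  also have "\<dots> \<le> 2 * ?S / (2 * pi * \<bar>l - \<xi>\<bar>)"
    using edge_bound by (rule divide_right_mono) simp
  also have "\<dots> = (?S / \<bar>l - \<xi>\<bar>) / pi" by simp
  also have "\<dots> \<le> ?S / \<bar>l - \<xi>\<bar>"
    using divide_left_mono[of 1 pi "?S / \<bar>l - \<xi>\<bar>"] pi_gt3 by (simp add: sum_nonneg)
  finally show ?thesis .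
qed

end

section \<open>Spectra\<close>

locale spectral_interval_union = interval_union +
  fixes \<Lambda> :: "real set"
  assumes spectrum: "is_spectrum \<Omega> \<Lambda>"
begin

lemma L2_inner_eq_set_integral: "L2_inner M u v = (LINT x:\<Omega>|lebesgue. u x * cnj (v x))"
  unfolding L2_inner_def set_lebesgue_integral_def by (rule integral_restrict_space) simp

sublocale complete_orthonormal_system M \<Lambda> expo
proof unfold_locales
  show "L2 M (expo l)" for l by (rule L2_expo)
  show "L2_inner M (expo l) (expo m) = (if l = m then 1 else 0)" if "l \<in> \<Lambda>" "m \<in> \<Lambda>" for l m
    using spectrum that by (simp add: is_spectrum_def L2_inner_eq_set_integral)
  fix g assume g: "L2 M g" and orth: "\<And>l. l \<in> \<Lambda> \<Longrightarrow> L2_inner M g (expo l) = 0"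
  define g' where "g' x = (if x \<in> \<Omega> then g x else 0)" for x
  have "g' \<in> borel_measurable lebesgue"
    using g measurable_restrict_space_iff[of \<Omega> lebesgue 0 borel g]
    unfolding g'_def[abs_def] L2_def by simp
  moreover have "set_integrable lebesgue \<Omega> (\<lambda>x. (norm (g' x))\<^sup>2)"
  proof -
    have "integrable lebesgue (\<lambda>x. indicator \<Omega> x *\<^sub>R (cmod (g x))\<^sup>2)"
      using g integrable_restrict_space[of \<Omega> lebesgue "\<lambda>x. (cmod (g x))\<^sup>2"] by (simp add: L2_def)
    moreover have "(\<lambda>x. indicator \<Omega> x *\<^sub>R (cmod (g x))\<^sup>2) = (\<lambda>x. indicator \<Omega> x *\<^sub>R (cmod (g' x))\<^sup>2)"
      by (auto simp: g'_def indicator_def fun_eq_iff)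
    ultimately show ?thesis unfolding set_integrable_def by simp
  qed
  moreover have "(LINT x:\<Omega>|lebesgue. g' x * cnj (expo l x)) = 0" if "l \<in> \<Lambda>" for l
  proof -
    have "(LINT x:\<Omega>|lebesgue. g' x * cnj (expo l x)) = (LINT x:\<Omega>|lebesgue. g x * cnj (expo l x))"
      unfolding set_lebesgue_integral_def
      by (rule Bochner_Integration.integral_cong) (auto simp: g'_def indicator_def)
    also have "\<dots> = 0" using orth[OF that] by (simp add: L2_inner_eq_set_integral)
    finally show ?thesis .
  qed
  ultimately have "AE x in lebesgue. x \<in> \<Omega> \<longrightarrow> g' x = 0"
    using spectrum unfolding is_spectrum_def by blast
  then have "AE x in lebesgue. x \<in> \<Omega> \<longrightarrow> g x = 0" by (rule eventually_mono) (simp add: g'_def)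
  then show "AE x in M. g x = 0" by (simp add: AE_restrict_space_iff)
qed

definition gap :: real where
  "gap = 1 / (2 * pi * radius)"

lemma gap_pos: "0 < gap"
  using radius_pos by (simp add: gap_def)

lemma spectrum_separated:
  assumes "l \<in> \<Lambda>" "m \<in> \<Lambda>" "l \<noteq> m"
  shows "gap \<le> \<bar>l - m\<bar>"
proof -
  have "(\<Sum>j<n. integral {a j..b j} (expo (l - m))) = 0"
    using orthonormal[OF assms(1,2)] assms(3) by (simp add: L2_inner_expo)
  then have "1 \<le> 2 * pi * \<bar>l - m\<bar> * radius" using norm_kernel_minus_one[of "l - m"] by simp
  then show ?thesis
    unfolding gap_def using radius_pos by (simp add: divide_le_eq mult.commute mult.left_commute)
qed

lemma qform_phi_spectrum:
  assumes "l \<in> \<Lambda>" "m \<in> \<Lambda>"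
  shows "qform n (phi n a b l) (phi n a b m) = 0"
proof (cases "l = m")
  case True
  then show ?thesis by (simp add: qform_phi expo_def)
next
  case False
  have "(\<Sum>j<n. integral {a j..b j} (expo (l - m))) = 0"
    using orthonormal[OF assms] False by (simp add: L2_inner_expo)
  moreover have "(\<Sum>j<n. integral {a j..b j} (expo (l - m)))
      = (\<Sum>j<n. expo (l - m) (b j) - expo (l - m) (a j)) / (2 * of_real pi * \<i> * of_real (l - m))"
    unfolding sum_divide_distrib using False lt by (intro sum.cong) (auto simp: integral_expo less_imp_le)
  ultimately show ?thesis using False by (simp add: qform_phi)
qed

lemma card_independent_less:
  assumes "finite B" "CV.independent B" "B \<subseteq> phi n a b ` \<Lambda>"
    and "\<mu> \<in> \<Lambda>" "phi n a b \<mu> \<notin> CV.span B"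
  shows "card B < n"
proof -
  let ?X = "insert (phi n a b \<mu>) B"
  have X: "?X \<subseteq> phi n a b ` \<Lambda>" using assms(3,4) by blast
  have "card ?X \<le> n"
  proof (rule card_isotropic_independent_le)
    show "finite ?X" using assms(1) by (rule finite.insertI)
    show "CV.independent ?X" by (rule CV.independent_insertI[OF assms(5,2)])
    show "?X \<subseteq> supported (2 * n)" using X phi_in_supported by blast
    fix v w assume "v \<in> ?X" "w \<in> ?X"
    then have "v \<in> phi n a b ` \<Lambda>" "w \<in> phi n a b ` \<Lambda>" using X by (auto dest: subsetD)
    then show "qform n v w = 0" by (auto simp: qform_phi_spectrum)
  qed
  moreover have "phi n a b \<mu> \<notin> B" using assms(5) CV.span_base by blast
  ultimately show ?thesis using assms(1) by simp
qed

lemma exists_nonspectral_near: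
  obtains \<xi> where "\<xi> \<notin> \<Lambda>" "y \<le> \<xi>" "\<xi> < y + gap"
proof (cases "y \<in> \<Lambda>")
  case True
  have "y + gap / 2 \<notin> \<Lambda>"
  proof
    assume "y + gap / 2 \<in> \<Lambda>"
    then have "gap \<le> \<bar>y - (y + gap / 2)\<bar>"
      by (rule spectrum_separated[OF True]) (use gap_pos in simp)
    then show False using gap_pos by simp
  qed
  with gap_pos show ?thesis by (intro that[of "y + gap / 2"]) auto
next
  case False
  with gap_pos show ?thesis by (intro that[of y]) auto
qed

text \<open>Parseval for the test function \<open>e\<^sub>\<xi> \<cdot> step c\<close>: its Fourier coefficients decay like
  \<open>1/|l - \<xi>|\<close>, so if those with \<open>|l - \<xi>| < R\<close> vanish its norm is \<open>O(1/R)\<close>.\<close>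
lemma sqnorm_modulated_step_le:
  assumes "\<xi> \<notin> \<Lambda>" "2 * gap \<le> R"
    and annihilate: "\<And>l. l \<in> \<Lambda> \<Longrightarrow> \<bar>l - \<xi>\<bar> < R \<Longrightarrow> edge_pairing \<xi> c (phi n a b l) = 0"
  shows "L2_sqnorm M (modulated_step \<xi> c) \<le> (\<Sum>j<n. cmod (c j))\<^sup>2 * (4 / (gap * R))"
proof (rule L2_sqnorm_le_if_Bessel_sums_le[OF L2_modulated_step])
  fix F assume F: "finite F" "F \<subseteq> \<Lambda>"
  let ?S = "\<Sum>j<n. cmod (c j)"
  let ?coeff = "\<lambda>l. cmod (L2_inner M (modulated_step \<xi> c) (expo l))"
  have ne: "\<xi> \<noteq> l" if "l \<in> \<Lambda>" for l using that assms(1) by auto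
  have "(\<Sum>l\<in>F. (?coeff l)\<^sup>2) = (\<Sum>l\<in>{l\<in>F. R \<le> \<bar>l - \<xi>\<bar>}. (?coeff l)\<^sup>2)"
  proof (rule sum.mono_neutral_right)
    show "\<forall>l\<in>F - {l\<in>F. R \<le> \<bar>l - \<xi>\<bar>}. (?coeff l)\<^sup>2 = 0"
    proof
      fix l assume "l \<in> F - {l\<in>F. R \<le> \<bar>l - \<xi>\<bar>}"
      then have "l \<in> \<Lambda>" "\<bar>l - \<xi>\<bar> < R" using F by auto
      then show "(?coeff l)\<^sup>2 = 0" by (simp add: L2_inner_modulated_step_expo ne annihilate)
    qed
  qed (use F in auto)
  also have "\<dots> \<le> (\<Sum>l\<in>{l\<in>F. R \<le> \<bar>l - \<xi>\<bar>}. ?S\<^sup>2 * (1 / (l - \<xi>)\<^sup>2))"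
  proof (rule sum_mono)
    fix l assume "l \<in> {l\<in>F. R \<le> \<bar>l - \<xi>\<bar>}"
    then have "?coeff l \<le> ?S / \<bar>l - \<xi>\<bar>" using F by (intro norm_L2_inner_modulated_step_expo_le ne) auto
    then have "(?coeff l)\<^sup>2 \<le> (?S / \<bar>l - \<xi>\<bar>)\<^sup>2" by (intro power_mono) auto
    then show "(?coeff l)\<^sup>2 \<le> ?S\<^sup>2 * (1 / (l - \<xi>)\<^sup>2)" by (simp add: power_divide)
  qed
  also have "\<dots> = ?S\<^sup>2 * (\<Sum>l\<in>{l\<in>F. R \<le> \<bar>l - \<xi>\<bar>}. 1 / (l - \<xi>)\<^sup>2)"
    by (simp add: sum_distrib_left)
  also have "\<dots> \<le> ?S\<^sup>2 * (4 / (gap * R))"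
    using F gap_pos assms(2) spectrum_separated
    by (intro mult_left_mono separated_inverse_square_sum_le[where L = \<Lambda>]) auto
  finally show "(\<Sum>l\<in>F. (?coeff l)\<^sup>2) \<le> ?S\<^sup>2 * (4 / (gap * R))" .
qed

definition far_radius :: real where
  "far_radius = 4 * real n / (gap * min_length) + 2 * gap"

text \<open>The norm of the test function is at least \<open>min_length \<cdot> \<Sum> |c\<^sub>j|\<^sup>2\<close>, which is too large for the
  previous bound once \<open>R \<ge> far_radius\<close>.\<close>
lemma edge_pairing_not_annihilated:
  assumes "\<xi> \<notin> \<Lambda>" "c \<in> supported n" "c \<noteq> 0" "far_radius \<le> R"
  obtains l where "l \<in> \<Lambda>" "\<bar>l - \<xi>\<bar> < R" "edge_pairing \<xi> c (phi n a b l) \<noteq> 0"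
proof -
  let ?S1 = "\<Sum>j<n. cmod (c j)" and ?S2 = "\<Sum>j<n. (cmod (c j))\<^sup>2"
  have False if annihilate: "\<And>l. l \<in> \<Lambda> \<Longrightarrow> \<bar>l - \<xi>\<bar> < R \<Longrightarrow> edge_pairing \<xi> c (phi n a b l) = 0"
  proof -
    have "0 \<le> 4 * real n / (gap * min_length)" using gap_pos min_length_pos by simp
    then have R: "2 * gap \<le> R" "0 < R" "4 * real n / (gap * min_length) < R"
      using assms(4) gap_pos by (auto simp: far_radius_def)
    have "min_length * ?S2 \<le> L2_sqnorm M (modulated_step \<xi> c)"
      by (rule sqnorm_modulated_step_ge)
    also have "\<dots> \<le> ?S1\<^sup>2 * (4 / (gap * R))"
      by (rule sqnorm_modulated_step_le[OF assms(1) R(1) annihilate])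
    also have "\<dots> \<le> (real n * ?S2) * (4 / (gap * R))"
      using Cauchy_Schwarz_ineq_sum[of "\<lambda>j. cmod (c j)" "\<lambda>_. 1" "{..<n}"] gap_pos R(2)
      by (intro mult_right_mono) (simp_all add: mult.commute)
    finally have "min_length * ?S2 \<le> (real n * (4 / (gap * R))) * ?S2" by (simp add: ac_simps)
    then have "min_length \<le> real n * (4 / (gap * R))"
      using supported_sum_squares_pos[OF assms(2,3)] by (rule mult_right_le_imp_le)
    then have "R \<le> 4 * real n / (gap * min_length)"
      using gap_pos min_length_pos R(2) by (simp add: field_simps)
    then show False using R(3) by simp
  qed
  then show ?thesis using that by blast
qed

definition window :: real where
  "window = 2 * far_radius + 2 * gap"

lemma window_pos: "0 < window"
  using gap_pos min_length_pos by (simp add: window_def far_radius_def add_pos_nonneg)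

lemma small_basis_if_not_generating:
  assumes "finite A" "A \<subseteq> \<Lambda>" "CV.span (phi n a b ` A) \<noteq> CV.span (phi n a b ` \<Lambda>)"
  obtains B where "finite B" "phi n a b ` A \<subseteq> CV.span B" "card B < n"
proof -
  have "CV.span (phi n a b ` A) \<subseteq> CV.span (phi n a b ` \<Lambda>)"
    using assms(2) by (intro CV.span_mono) auto
  moreover have "CV.span (phi n a b ` \<Lambda>) \<subseteq> CV.span (phi n a b ` A)"
    if "phi n a b ` \<Lambda> \<subseteq> CV.span (phi n a b ` A)"
    using that by (intro CV.span_minimal) auto
  ultimately obtain \<mu> where \<mu>: "\<mu> \<in> \<Lambda>" "phi n a b \<mu> \<notin> CV.span (phi n a b ` A)"
    using assms(3) by blast
  obtain B where B: "B \<subseteq> phi n a b ` A" "CV.independent B" "phi n a b ` A \<subseteq> CV.span B"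
    using CV.maximal_independent_subset[of "phi n a b ` A"] by blast
  have "finite B" using assms(1) B(1) finite_subset by blast
  moreover have "card B < n"
  proof (rule card_independent_less[OF \<open>finite B\<close> B(2) _ \<mu>(1)])
    show "B \<subseteq> phi n a b ` \<Lambda>" using B(1) assms(2) by blast
    show "phi n a b \<mu> \<notin> CV.span B" using \<mu>(2) B(1) CV.span_mono by blast
  qed
  ultimately show ?thesis using B(3) that by blast
qed

text \<open>A non-generating window would leave some \<open>c \<noteq> 0\<close> annihilating all of its \<open>\<phi>\<close>-vectors,
  contradicting the previous lemma at the centre of the window.\<close>
lemma generating_window: "generating_set n a b \<Lambda> (\<Lambda> \<inter> {x<..<x + window})"
proof -
  define A where "A = \<Lambda> \<inter> {x<..<x + window}"
  have "CV.span (phi n a b ` A) = CV.span (phi n a b ` \<Lambda>)"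
  proof (rule ccontr)
    assume "CV.span (phi n a b ` A) \<noteq> CV.span (phi n a b ` \<Lambda>)"
    moreover have "finite A"
      unfolding A_def by (rule separated_window_finite[OF spectrum_separated gap_pos])
    ultimately obtain B where B: "finite B" "phi n a b ` A \<subseteq> CV.span B" "card B < n"
      using small_basis_if_not_generating[of A] by (auto simp: A_def)
    obtain \<xi> where \<xi>: "\<xi> \<notin> \<Lambda>" "x + far_radius + gap \<le> \<xi>" "\<xi> < x + far_radius + gap + gap"
      by (rule exists_nonspectral_near)
    obtain c where c: "c \<in> supported n" "c \<noteq> 0" "\<And>w. w \<in> B \<Longrightarrow> edge_pairing \<xi> c w = 0"
      using linear_functionals_common_zero[where L = "\<lambda>w c. edge_pairing \<xi> c w",
          OF B(1,3) edge_pairing_add edge_pairing_cscale] by blast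
    obtain l where l: "l \<in> \<Lambda>" "\<bar>l - \<xi>\<bar> < far_radius" "edge_pairing \<xi> c (phi n a b l) \<noteq> 0"
      using edge_pairing_not_annihilated[OF \<xi>(1) c(1,2) order_refl] by blast
    have "l \<in> A" using l(1,2) \<xi>(2,3) unfolding A_def window_def by auto
    then have "phi n a b l \<in> CV.span B" using B(2) by blast
    moreover have "CV.span B \<subseteq> {w. edge_pairing \<xi> c w = 0}"
      using c(3) by (intro CV.span_minimal subspace_edge_pairing_zero) auto
    ultimately show False using l(3) by blast
  qed
  then show ?thesis unfolding generating_set_def cspan_eq_span A_def by auto
qed

end

theorem lemma2:
  fixes n :: nat and a b :: "nat \<Rightarrow> real" and \<Lambda> :: "real set"
  assumes "\<forall>j<n. a j < b j"
    and "\<forall>j<n. \<forall>k<n. j \<noteq> k \<longrightarrow> {a j<..<b j} \<inter> {a k<..<b k} = {}"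
    and "(\<Sum>j<n. b j - a j) = 1"
    and "is_spectrum (\<Union>j<n. {a j<..<b j}) \<Lambda>"
  shows "\<exists>T>0. \<forall>x. generating_set n a b \<Lambda> (\<Lambda> \<inter> {x<..<x+T})"
proof -
  interpret interval_union n a b
    by unfold_locales (use assms(1-3) in auto)
  interpret spectral_interval_union n a b \<Lambda>
    by unfold_locales (use assms(4) in \<open>simp add: \<Omega>_def\<close>)
  show ?thesis using window_pos generating_window by blast
qed

end
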